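(* Let $\Pi$ and $\Pi'$ be $n$-dimensional linear spaces, both satisfying the exchange axiom and the axiom (P2), let $k\ge 1$ with $n\ge 2k+1$, and let $f$ be an injection of $\mathcal{G}_k(\Pi)$ to $\mathcal{G}_k(\Pi')$ sending base subsets to base subsets. For each $(k-1)$-dimensional subspace $S$ of $\Pi$ let $f_{k-1}(S)$ be the unique subspace $S'$ of $\Pi'$ of dimension $k-1$ or $k+1$ with $f(\mathcal{G}_k(S))\subset\mathcal{G}_k(S')$. Suppose there is a strong embedding $g$ of $\Pi$ to $\Pi'$ with $f_{k-1}(S)=\overline{g(S)}$ for all $S\in\mathcal{G}_{k-1}(\Pi)$. Then $f(U)=\overline{g(U)}$ for all $U\in\mathcal{G}_k(\Pi)$.
   Context: A linear space $\Pi=(P,\mathcal{L})$ is a set $P$ of points with a family $\mathcal{L}$ of proper subsets (lines) such that each line has at least two points and any two distinct points $p,q$ lie on exactly one line $pq$. Points are collinear if some line contains them. A subspace is a set $S\subset P$ with $pq\subset S$ for all distinct $p,q\in S$; $\overline{X}$ is the smallest subspace containing $X$. A set $X$ is independent if $\overline{X}$ is not spanned by a proper subset of $X$; a base of $\Pi$ is an independent set spanning $P$. A subspace is $m$-dimensional if $m+1$ is the smallest number of points spanning it. Exchange axiom: for every $X\subset P$ and $p_1,p_2\in P\setminus\overline{X}$, $p_2\in\overline{X\cup\{p_1\}}$ implies $p_1\in\overline{X\cup\{p_2\}}$. Axiom (P2): every line has at least three points. $\mathcal{G}_k(\Pi)$ is the set of $k$-dimensional subspaces; for a subspace $U$, $\mathcal{G}_k(U)$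 is the set of $k$-dimensional subspaces incident to $U$ (contained in $U$ or containing $U$). The base subset of $\mathcal{G}_k(\Pi)$ associated with a base $B$ is the set of all $k$-dimensional subspaces spanned by points of $B$. A strong embedding of $\Pi$ to $\Pi'$ is an injection $g:P\to P'$ sending collinear triples to collinear triples, non-collinear triples to non-collinear triples and independent sets to independent sets; then $\dim\overline{g(S)}=\dim S$ for every subspace $S$. *)

theory Defs
  imports Main
begin

definition linear_space :: "'p set \<Rightarrow> 'p set set \<Rightarrow> bool" where
  "linear_space P L \<longleftrightarrow>
     (\<forall>l\<in>L. l \<subset> P \<and> (\<exists>a b. a \<in> l \<and> b \<in> l \<and> a \<noteq> b)) \<and>
     (\<forall>p\<in>P. \<forall>q\<in>P. p \<noteq> q \<longrightarrow> (\<exists>!l. l \<in> L \<and> p \<in> l \<and> q \<in> l))"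

definition ls_line :: "'p set set \<Rightarrow> 'p \<Rightarrow> 'p \<Rightarrow> 'p set" where
  "ls_line L p q = (THE l. l \<in> L \<and> p \<in> l \<and> q \<in> l)"

definition ls_collinear :: "'p set set \<Rightarrow> 'p set \<Rightarrow> bool" where
  "ls_collinear L X \<longleftrightarrow> (\<exists>l\<in>L. X \<subseteq> l)"

definition ls_subspace :: "'p set \<Rightarrow> 'p set set \<Rightarrow> 'p set \<Rightarrow> bool" where
  "ls_subspace P L S \<longleftrightarrow> S \<subseteq> P \<and>
     (\<forall>p\<in>S. \<forall>q\<in>S. p \<noteq> q \<longrightarrow> ls_line L p q \<subseteq> S)"

text \<open>The smallest subspace containing X (closure \<open>overline X\<close>).\<close>
definition ls_span :: "'p set \<Rightarrow> 'p set set \<Rightarrow> 'p set \<Rightarrow> 'p set" where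
  "ls_span P L X = \<Inter>{S. ls_subspace P L S \<and> X \<subseteq> S}"

definition ls_independent :: "'p set \<Rightarrow> 'p set set \<Rightarrow> 'p set \<Rightarrow> bool" where
  "ls_independent P L X \<longleftrightarrow> X \<subseteq> P \<and> (\<forall>Y. Y \<subset> X \<longrightarrow> ls_span P L Y \<noteq> ls_span P L X)"

definition ls_base :: "'p set \<Rightarrow> 'p set set \<Rightarrow> 'p set \<Rightarrow> bool" where
  "ls_base P L B \<longleftrightarrow> ls_independent P L B \<and> ls_span P L B = P"

text \<open>S is an m-dimensional subspace: m+1 is the smallest number of points spanning S.\<close>
definition ls_has_dim :: "'p set \<Rightarrow> 'p set set \<Rightarrow> 'p set \<Rightarrow> nat \<Rightarrow> bool" where
  "ls_has_dim P L S m \<longleftrightarrow> ls_subspace P L S \<and>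
     (\<exists>X. finite X \<and> X \<subseteq> S \<and> ls_span P L X = S \<and> card X = m + 1) \<and>
     (\<forall>X. finite X \<and> X \<subseteq> S \<and> ls_span P L X = S \<longrightarrow> m + 1 \<le> card X)"

definition exchange_axiom :: "'p set \<Rightarrow> 'p set set \<Rightarrow> bool" where
  "exchange_axiom P L \<longleftrightarrow>
     (\<forall>X p1 p2. X \<subseteq> P \<longrightarrow> p1 \<in> P - ls_span P L X \<longrightarrow> p2 \<in> P - ls_span P L X \<longrightarrow>
        p2 \<in> ls_span P L (X \<union> {p1}) \<longrightarrow> p1 \<in> ls_span P L (X \<union> {p2}))"

definition axiom_P2 :: "'p set set \<Rightarrow> bool" where
  "axiom_P2 L \<longleftrightarrow> (\<forall>l\<in>L. \<exists>a b c. a \<in> l \<and> b \<in> l \<and> c \<in> l \<and> a \<noteq> b \<and> a \<noteq> c \<and> b \<noteq> c)"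

definition Grass :: "'p set \<Rightarrow> 'p set set \<Rightarrow> nat \<Rightarrow> 'p set set" where
  "Grass P L k = {S. ls_has_dim P L S k}"

definition Grass_inc :: "'p set \<Rightarrow> 'p set set \<Rightarrow> nat \<Rightarrow> 'p set \<Rightarrow> 'p set set" where
  "Grass_inc P L k U = {S \<in> Grass P L k. S \<subseteq> U \<or> U \<subseteq> S}"

definition base_subset :: "'p set \<Rightarrow> 'p set set \<Rightarrow> nat \<Rightarrow> 'p set \<Rightarrow> 'p set set" where
  "base_subset P L k B = {S \<in> Grass P L k. \<exists>X. X \<subseteq> B \<and> S = ls_span P L X}"

definition is_base_subset :: "'p set \<Rightarrow> 'p set set \<Rightarrow> nat \<Rightarrow> 'p set set \<Rightarrow> bool" where
  "is_base_subset P L k \<B> \<longleftrightarrow> (\<exists>B. ls_base P L B \<and> \<B> = base_subset P L k B)"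

definition strong_embedding ::
  "'p set \<Rightarrow> 'p set set \<Rightarrow> 'q set \<Rightarrow> 'q set set \<Rightarrow> ('p \<Rightarrow> 'q) \<Rightarrow> bool" where
  "strong_embedding P L P' L' g \<longleftrightarrow>
     inj_on g P \<and> g ` P \<subseteq> P' \<and>
     (\<forall>a\<in>P. \<forall>b\<in>P. \<forall>c\<in>P. ls_collinear L {a, b, c} \<longrightarrow> ls_collinear L' {g a, g b, g c}) \<and>
     (\<forall>a\<in>P. \<forall>b\<in>P. \<forall>c\<in>P. \<not> ls_collinear L {a, b, c} \<longrightarrow> \<not> ls_collinear L' {g a, g b, g c}) \<and>
     (\<forall>X. X \<subseteq> P \<longrightarrow> ls_independent P L X \<longrightarrow> ls_independent P' L' (g ` X))"

definition f_lower ::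
  "'p set \<Rightarrow> 'p set set \<Rightarrow> 'q set \<Rightarrow> 'q set set \<Rightarrow> nat \<Rightarrow> ('p set \<Rightarrow> 'q set) \<Rightarrow> 'p set \<Rightarrow> 'q set" where
  "f_lower P L P' L' k f S = (THE S'. (ls_has_dim P' L' S' (k - 1) \<or> ls_has_dim P' L' S' (k + 1)) \<and>
        f ` Grass_inc P L k S \<subseteq> Grass_inc P' L' k S')"

end

theory Submission
  imports Defs
begin

text \<open>The hypothesis on \<open>g\<close> says something about \<open>f\<close> only once \<open>f\<^sub>k\<^sub>-\<^sub>1\<close> is known to be
  well defined, i.e. once \<open>f\<close> maps every star \<open>\<G>\<^sub>k(S)\<close> into a unique star or top.
  Inside a base subset, the members containing \<open>i\<close> but not \<open>j\<close> form a set that is determined by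
  base subsets alone: its complement lies in a second base subset (by (P2) the line \<open>ij\<close> has a
  third point that can replace \<open>i\<close>), whereas a subset meeting all these sets determines its base
  subset. Hence \<open>f\<close> maps such sets to sets of the same kind, and counting the pairs \<open>(i, j)\<close> that
  separate two adjacent members shows that \<open>f\<close> preserves adjacency on stars. Pairwise adjacent
  \<open>k\<close>-subspaces lie in a star or a top, and three members of a star taken from one base subset
  show that the image of a star does not lie in a star and a top at the same time.

  Now let \<open>U\<close> be spanned by independent points \<open>x\<^sub>0, \<dots>, x\<^sub>k\<close>. Each \<open>x\<^sub>i\<close> lies in a
  \<open>(k-1)\<close>-subspace \<open>S \<subseteq> U\<close> spanned by \<open>k\<close> of these points, and \<open>f(U) \<in> \<G>\<^sub>k(f\<^sub>k\<^sub>-\<^sub>1(S))\<close> with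
  \<open>f\<^sub>k\<^sub>-\<^sub>1(S) = \<langle>g(S)\<rangle>\<close> gives \<open>g(x\<^sub>i) \<in> f(U)\<close>. So the \<open>k\<close>-dimensional subspace \<open>\<langle>g(U)\<rangle>\<close> is
  contained in \<open>f(U)\<close>, and the two coincide.\<close>

section \<open>Linear spaces\<close>

locale lin_space =
  fixes P :: "'p set" and L :: "'p set set"
  assumes linear_space: "linear_space P L"
begin

abbreviation "sp \<equiv> ls_span P L"

abbreviation "subsp \<equiv> ls_subspace P L"

lemma line_subset: "l \<in> L \<Longrightarrow> l \<subseteq> P"
  using linear_space unfolding linear_space_def by (meson psubsetE)

lemma line_ex1: "p \<in> P \<Longrightarrow> q \<in> P \<Longrightarrow> p \<noteq> q \<Longrightarrow> \<exists>!l. l \<in> L \<and> p \<in> l \<and> q \<in> l"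
  using linear_space unfolding linear_space_def by (elim conjE) simp

lemma ls_line_spec:
  assumes "p \<in> P" "q \<in> P" "p \<noteq> q"
  shows "ls_line L p q \<in> L" "p \<in> ls_line L p q" "q \<in> ls_line L p q"
  using theI'[OF line_ex1[OF assms]] unfolding ls_line_def by blast+

lemma ls_line_unique:
  assumes "l \<in> L" "p \<in> l" "q \<in> l" "p \<noteq> q"
  shows "ls_line L p q = l"
  unfolding ls_line_def
  by (rule the1_equality) (use assms line_subset line_ex1 in blast)+

lemma subspace_P: "subsp P"
  unfolding ls_subspace_def using ls_line_spec line_subset by blast

lemma subspace_subset: "subsp S \<Longrightarrow> S \<subseteq> P"
  unfolding ls_subspace_def by blast

lemma subspace_Inter: "\<SS> \<noteq> {} \<Longrightarrow> \<forall>S\<in>\<SS>. subsp S \<Longrightarrow> subsp (\<Inter>\<SS>)"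
  unfolding ls_subspace_def by blast

lemma span_subspace: "X \<subseteq> P \<Longrightarrow> subsp (sp X)"
  unfolding ls_span_def by (rule subspace_Inter) (use subspace_P in auto)

lemma span_superset: "X \<subseteq> P \<Longrightarrow> X \<subseteq> sp X"
  unfolding ls_span_def by blast

lemma span_subset_P: "X \<subseteq> P \<Longrightarrow> sp X \<subseteq> P"
  unfolding ls_span_def using subspace_P by blast

lemma span_minimal: "subsp S \<Longrightarrow> X \<subseteq> S \<Longrightarrow> sp X \<subseteq> S"
  unfolding ls_span_def by blast

lemma span_subspace_eq: "subsp S \<Longrightarrow> sp S = S"
  using span_minimal span_superset subspace_subset by blast

lemma span_mono: "X \<subseteq> Y \<Longrightarrow> Y \<subseteq> P \<Longrightarrow> sp X \<subseteq> sp Y"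
  using span_minimal[OF span_subspace] span_superset by blast

lemma span_subset_span: "X \<subseteq> sp Y \<Longrightarrow> Y \<subseteq> P \<Longrightarrow> sp X \<subseteq> sp Y"
  using span_minimal span_subspace by blast

lemma span_empty: "sp {} = {}"
  by (rule span_subspace_eq) (simp add: ls_subspace_def)

lemma span_singleton: "p \<in> P \<Longrightarrow> sp {p} = {p}"
  by (rule span_subspace_eq) (simp add: ls_subspace_def)

lemma ls_line_subset_span:
  assumes "p \<in> sp X" "q \<in> sp X" "p \<noteq> q" "X \<subseteq> P"
  shows "ls_line L p q \<subseteq> sp X"
  using span_subspace[OF assms(4)] assms(1-3) unfolding ls_subspace_def by blast

lemma span_Un_span: "X \<subseteq> P \<Longrightarrow> Y \<subseteq> P \<Longrightarrow> sp (sp X \<union> sp Y) = sp (X \<union> Y)"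
proof (rule subset_antisym)
  assume "X \<subseteq> P" "Y \<subseteq> P"
  then show "sp (sp X \<union> sp Y) \<subseteq> sp (X \<union> Y)"
    using span_mono[of X "X \<union> Y"] span_mono[of Y "X \<union> Y"] by (intro span_subset_span) auto
  show "sp (X \<union> Y) \<subseteq> sp (sp X \<union> sp Y)"
    using \<open>X \<subseteq> P\<close> \<open>Y \<subseteq> P\<close> by (intro span_mono) (auto dest: span_superset span_subset_P)
qed

lemma span_insert_in_span:
  assumes "X \<subseteq> P" "p \<in> sp X"
  shows "sp (insert p X) = sp X"
proof (rule subset_antisym)
  show "sp (insert p X) \<subseteq> sp X"
    using assms span_superset by (intro span_subset_span) auto
  show "sp X \<subseteq> sp (insert p X)"
    using assms span_subset_P by (intro span_mono) auto
qed

lemma line_third_point: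
  assumes P2: "axiom_P2 L" and ij: "i \<in> P" "j \<in> P" "i \<noteq> j"
  obtains c where "c \<in> P" "c \<noteq> i" "c \<noteq> j" "c \<in> sp {i, j}" "i \<in> sp {c, j}"
proof -
  define l where "l = ls_line L i j"
  note l = ls_line_spec[OF ij, folded l_def]
  obtain c where c: "c \<in> l" "c \<noteq> i" "c \<noteq> j"
    using P2 l(1) unfolding axiom_P2_def by metis
  have cP: "c \<in> P" using c(1) l(1) line_subset by blast
  have "l \<subseteq> sp {i, j}"
    using ls_line_subset_span[of i "{i, j}" j] span_superset[of "{i, j}"] ij l_def by auto
  moreover have "l = ls_line L c j" using ls_line_unique[OF l(1) c(1) l(3) c(3)] by simp
  then have "l \<subseteq> sp {c, j}"
    using ls_line_subset_span[of c "{c, j}" j] span_superset[of "{c, j}"] ij cP c by auto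
  ultimately show thesis using that cP c l by blast
qed

end

section \<open>Independence and dimension\<close>

locale exchange_space = lin_space +
  assumes exchange_axiom: "exchange_axiom P L"
begin

abbreviation "indep \<equiv> ls_independent P L"

lemma exchange:
  assumes "X \<subseteq> P" "p \<in> P" "p \<notin> sp X" "q \<in> P" "q \<notin> sp X" "q \<in> sp (insert p X)"
  shows "p \<in> sp (insert q X)"
  using exchange_axiom assms unfolding exchange_axiom_def by auto

lemma independent_subset_P: "indep I \<Longrightarrow> I \<subseteq> P"
  by (simp add: ls_independent_def)

lemma independent_iff: "indep I \<longleftrightarrow> I \<subseteq> P \<and> (\<forall>x\<in>I. x \<notin> sp (I - {x}))"
proof
  assume I: "indep I"
  then have IP: "I \<subseteq> P" by (rule independent_subset_P)
  have "x \<notin> sp (I - {x})" if x: "x \<in> I" for x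
  proof
    assume "x \<in> sp (I - {x})"
    then have "sp I \<subseteq> sp (I - {x})"
      using IP span_superset[of "I - {x}"] by (intro span_subset_span) auto
    moreover have "sp (I - {x}) \<subseteq> sp I" using IP by (intro span_mono) auto
    moreover have "I - {x} \<subset> I" using x by blast
    ultimately show False using I unfolding ls_independent_def by blast
  qed
  then show "I \<subseteq> P \<and> (\<forall>x\<in>I. x \<notin> sp (I - {x}))" using IP by blast
next
  assume I: "I \<subseteq> P \<and> (\<forall>x\<in>I. x \<notin> sp (I - {x}))"
  show "indep I" unfolding ls_independent_def
  proof (intro conjI allI impI)
    show "I \<subseteq> P" using I by blast
    fix Y assume "Y \<subset> I"
    then obtain x where x: "x \<in> I" "x \<notin> Y" by blast
    have "sp Y \<subseteq> sp (I - {x})" using x \<open>Y \<subset> I\<close> I by (intro span_mono) auto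
    moreover have "x \<in> sp I" using x I span_superset by blast
    ultimately show "sp Y \<noteq> sp I" using x I by blast
  qed
qed

lemma independent_not_in_span: "indep I \<Longrightarrow> x \<in> I \<Longrightarrow> x \<notin> sp (I - {x})"
  using independent_iff by blast

lemma independent_mono: "indep I \<Longrightarrow> J \<subseteq> I \<Longrightarrow> indep J"
proof -
  assume I: "indep I" and "J \<subseteq> I"
  have IP: "I \<subseteq> P" using I by (rule independent_subset_P)
  have "sp (J - {x}) \<subseteq> sp (I - {x})" for x
    using \<open>J \<subseteq> I\<close> IP by (intro span_mono) auto
  then show "indep J"
    using independent_not_in_span[OF I] \<open>J \<subseteq> I\<close> IP unfolding independent_iff by blast
qed

lemma independent_insert:
  assumes I: "indep I" and p: "p \<in> P" "p \<notin> sp I"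
  shows "indep (insert p I)"
proof -
  have IP: "I \<subseteq> P" using I by (rule independent_subset_P)
  have pI: "p \<notin> I" using p span_superset[OF IP] by blast
  have "x \<notin> sp (I - {x} \<union> {p})" if x: "x \<in> I" for x
  proof
    assume "x \<in> sp (I - {x} \<union> {p})"
    moreover have "x \<notin> sp (I - {x})" using independent_not_in_span[OF I x] .
    moreover have "p \<notin> sp (I - {x})" using p span_mono[of "I - {x}" I] IP by blast
    ultimately have "p \<in> sp (insert x (I - {x}))"
      using exchange[of "I - {x}" p x] IP x p by auto
    then show False using p x by (simp add: insert_absorb)
  qed
  moreover have "insert p I - {x} = I - {x} \<union> {p}" if "x \<in> I" for x
    using that pI by blast
  ultimately show ?thesis
    unfolding independent_iff using IP p pI by (auto simp: insert_Diff_if)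
qed

lemma span_critical_element:
  assumes "finite R" "A \<union> R \<subseteq> P" "x \<in> sp (A \<union> R)" "x \<notin> sp A"
  shows "\<exists>y\<in>R. \<exists>R0 \<subseteq> R. y \<notin> R0 \<and> x \<notin> sp (A \<union> R0) \<and> x \<in> sp (insert y (A \<union> R0))"
  using assms
proof (induction R rule: finite_induct)
  case empty
  then show ?case by simp
next
  case (insert r R)
  show ?case
  proof (cases "x \<in> sp (A \<union> R)")
    case True
    then show ?thesis using insert by blast
  next
    case False
    then show ?thesis using insert by (intro bexI[of _ r] exI[of _ R]) auto
  qed
qed

lemma steinitz_exchange:
  assumes I: "indep I" and Y: "finite Y" "Y \<subseteq> P" and IY: "I \<subseteq> sp Y" and x: "x \<in> I" "x \<notin> Y"
  shows "\<exists>y \<in> Y - I. I \<subseteq> sp (insert x (Y - {y}))"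
proof -
  have IP: "I \<subseteq> P" using I by (rule independent_subset_P)
  define C where "C = Y \<inter> I"
  have "sp C \<subseteq> sp (I - {x})" using C_def x IP by (intro span_mono) auto
  then have xC: "x \<notin> sp C" using independent_not_in_span[OF I x(1)] by blast
  have "C \<union> (Y - I) = Y" using C_def by blast
  then obtain y R0 where y: "y \<in> Y - I" "R0 \<subseteq> Y - I" "y \<notin> R0"
    and R0: "x \<notin> sp (C \<union> R0)" "x \<in> sp (insert y (C \<union> R0))"
    using span_critical_element[of "Y - I" C x] xC IY x Y by auto
  define X where "X = C \<union> R0"
  have XP: "X \<subseteq> P" using X_def y Y C_def by blast
  have "y \<notin> sp X"
    using span_insert_in_span[OF XP] R0 X_def by fastforce
  then have "y \<in> sp (insert x X)"
    using exchange[OF XP _ _ _ R0(1)[folded X_def]] R0(2) X_def y Y x IP by blast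
  moreover have "insert x X \<subseteq> insert x (Y - {y})" using X_def C_def y by blast
  moreover have YP': "insert x (Y - {y}) \<subseteq> P" using x IP Y by blast
  ultimately have "y \<in> sp (insert x (Y - {y}))" using span_mono by blast
  then have "Y \<subseteq> sp (insert x (Y - {y}))" using span_superset[OF YP'] by blast
  then have "sp Y \<subseteq> sp (insert x (Y - {y}))" using span_subset_span YP' by blast
  then show ?thesis using IY y(1) by blast
qed

lemma steinitz_finite:
  "finite I \<Longrightarrow> indep I \<Longrightarrow> finite Y \<Longrightarrow> Y \<subseteq> P \<Longrightarrow> I \<subseteq> sp Y \<Longrightarrow> card I \<le> card Y"
proof (induction "card (I - Y)" arbitrary: Y rule: less_induct)
  case less
  show ?case
  proof (cases "I \<subseteq> Y")
    case True
    then show ?thesis using card_mono less by blast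
  next
    case False
    then obtain x where x: "x \<in> I" "x \<notin> Y" by blast
    obtain y where y: "y \<in> Y - I" "I \<subseteq> sp (insert x (Y - {y}))"
      using steinitz_exchange[OF less(3-6) x] by blast
    define Y' where "Y' = insert x (Y - {y})"
    have Y': "finite Y'" "Y' \<subseteq> P"
      using Y'_def less x independent_subset_P[OF less(3)] by auto
    have "card Y' = Suc (card (Y - {y}))" using Y'_def x less by simp
    also have "\<dots> = card Y" using y less by (intro card_Suc_Diff1) auto
    finally have "card Y' = card Y" .
    moreover have "I - Y' = (I - Y) - {x}" using Y'_def y by blast
    then have "card (I - Y') < card (I - Y)"
      using x less by (metis DiffI card_Diff1_less finite_Diff)
    ultimately show ?thesis using less Y' y Y'_def by metis
  qed
qed

lemma independent_Int_span: "indep B \<Longrightarrow> Z \<subseteq> B \<Longrightarrow> B \<inter> sp Z = Z"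
proof -
  assume B: "indep B" and Z: "Z \<subseteq> B"
  have BP: "B \<subseteq> P" using B by (rule independent_subset_P)
  have "b \<notin> sp Z" if "b \<in> B" "b \<notin> Z" for b
    using that span_mono[of Z "B - {b}"] independent_not_in_span[OF B] Z BP by blast
  then show ?thesis using Z span_superset BP by blast
qed

lemma span_Int_remove_point:
  assumes I: "indep I" and XI: "X \<subseteq> I" and YI: "Y \<subseteq> I" and x: "x \<in> X" "x \<notin> Y"
  shows "sp X \<inter> sp Y \<subseteq> sp (X - {x})"
proof
  fix q assume q: "q \<in> sp X \<inter> sp Y"
  show "q \<in> sp (X - {x})"
  proof (rule ccontr)
    assume qX0: "q \<notin> sp (X - {x})"
    have IP: "I \<subseteq> P" using I by (rule independent_subset_P)
    have X0P: "X - {x} \<subseteq> P" and xI: "x \<in> I" using XI IP x by blast+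
    have "sp (X - {x}) \<subseteq> sp (I - {x})" using XI IP by (intro span_mono) auto
    then have xX0: "x \<notin> sp (X - {x})" using independent_not_in_span[OF I xI] by blast
    have "q \<in> sp (insert x (X - {x}))" using q x by (simp add: insert_absorb)
    then have "x \<in> sp (insert q (X - {x}))"
      using exchange[OF X0P _ xX0 _ qX0] xI IP q span_subset_P[of Y] YI by blast
    moreover have "insert q (X - {x}) \<subseteq> sp (X - {x} \<union> Y)"
      using q X0P YI IP span_superset[of "X - {x} \<union> Y"] span_mono[of Y "X - {x} \<union> Y"] by blast
    then have "sp (insert q (X - {x})) \<subseteq> sp (X - {x} \<union> Y)"
      using X0P YI IP by (intro span_subset_span) auto
    moreover have "sp (X - {x} \<union> Y) \<subseteq> sp (I - {x})"
      using XI YI x IP by (intro span_mono) auto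
    ultimately show False using independent_not_in_span[OF I xI] by blast
  qed
qed

lemma span_Int_independent:
  assumes I: "indep I" "finite I" and XI: "X \<subseteq> I" and YI: "Y \<subseteq> I"
  shows "sp X \<inter> sp Y = sp (X \<inter> Y)"
proof
  have IP: "I \<subseteq> P" using I(1) by (rule independent_subset_P)
  show "sp (X \<inter> Y) \<subseteq> sp X \<inter> sp Y"
    using XI YI IP span_mono[of "X \<inter> Y" X] span_mono[of "X \<inter> Y" Y] by blast
  show "sp X \<inter> sp Y \<subseteq> sp (X \<inter> Y)"
    using XI
  proof (induction "card (X - Y)" arbitrary: X rule: less_induct)
    case less
    show ?case
    proof (cases "X \<subseteq> Y")
      case True
      then show ?thesis by (simp add: Int_absorb2)
    next
      case False
      then obtain x where x: "x \<in> X" "x \<notin> Y" by blast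
      have "X - {x} - Y = (X - Y) - {x}" by blast
      moreover have "finite (X - Y)" using less.prems I(2) finite_subset by blast
      ultimately have "card (X - {x} - Y) < card (X - Y)" using x by (metis DiffI card_Diff1_less)
      moreover have "X - {x} \<subseteq> I" using less.prems by blast
      ultimately have IH: "sp (X - {x}) \<inter> sp Y \<subseteq> sp ((X - {x}) \<inter> Y)" by (rule less.hyps)
      have "sp X \<inter> sp Y \<subseteq> sp (X - {x}) \<inter> sp Y"
        using span_Int_remove_point[OF I(1) less.prems YI x] by blast
      also have "\<dots> \<subseteq> sp ((X - {x}) \<inter> Y)" by (rule IH)
      also have "(X - {x}) \<inter> Y = X \<inter> Y" using x by blast
      finally show ?thesis .
    qed
  qed
qed

lemma span_Inter_independent:
  assumes I: "indep I" "finite I" and F: "finite F" "F \<noteq> {}" "\<forall>Z\<in>F. Z \<subseteq> I"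
  shows "\<Inter>(sp ` F) = sp (\<Inter>F)"
  using F
proof (induction F rule: finite_ne_induct)
  case (insert Z F)
  then have "sp Z \<inter> sp (\<Inter>F) = sp (Z \<inter> \<Inter>F)"
    using span_Int_independent[OF I, of Z "\<Inter>F"] by blast
  then show ?case using insert by simp
qed simp

end

locale fin_dim_space = exchange_space +
  fixes n :: nat
  assumes dim_P: "ls_has_dim P L P n"
begin

abbreviation "hdim \<equiv> ls_has_dim P L"

lemma has_dim_subspace: "hdim S m \<Longrightarrow> subsp S"
  unfolding ls_has_dim_def by blast

lemma has_dim_subset_P: "hdim S m \<Longrightarrow> S \<subseteq> P"
  using has_dim_subspace subspace_subset by blast

lemma has_dim_spanning_set:
  "hdim S m \<Longrightarrow> \<exists>X. finite X \<and> X \<subseteq> S \<and> sp X = S \<and> card X = m + 1"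
  unfolding ls_has_dim_def by blast

lemma has_dim_card_spanning_set:
  "hdim S m \<Longrightarrow> finite X \<Longrightarrow> X \<subseteq> S \<Longrightarrow> sp X = S \<Longrightarrow> m + 1 \<le> card X"
  unfolding ls_has_dim_def by blast

lemma independent_finite: "indep I \<Longrightarrow> finite I"
proof (rule ccontr)
  assume I: "indep I" "infinite I"
  obtain X0 where X0: "finite X0" "X0 \<subseteq> P" "sp X0 = P" "card X0 = n + 1"
    using has_dim_spanning_set[OF dim_P] by blast
  obtain I0 where I0: "I0 \<subseteq> I" "finite I0" "card I0 = n + 2"
    using infinite_arbitrarily_large[OF I(2)] by blast
  have "indep I0" using independent_mono I I0 by blast
  moreover have "I0 \<subseteq> sp X0" using X0 I0 independent_subset_P[OF I(1)] by blast
  ultimately have "card I0 \<le> card X0" using steinitz_finite I0 X0 by blast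
  then show False using I0 X0 by simp
qed

lemma steinitz: "indep I \<Longrightarrow> finite Y \<Longrightarrow> Y \<subseteq> P \<Longrightarrow> I \<subseteq> sp Y \<Longrightarrow> card I \<le> card Y"
  using steinitz_finite independent_finite by blast

lemma independent_card_le: "indep I \<Longrightarrow> card I \<le> n + 1"
  using has_dim_spanning_set[OF dim_P] steinitz independent_subset_P by metis

lemma has_dim_independent_basis:
  assumes S: "hdim S m"
  obtains X where "indep X" "card X = m + 1" "sp X = S"
proof -
  obtain X where X: "finite X" "X \<subseteq> S" "sp X = S" "card X = m + 1"
    using has_dim_spanning_set[OF S] by blast
  have XP: "X \<subseteq> P" using X(2) has_dim_subset_P[OF S] by blast
  have "x \<notin> sp (X - {x})" if x: "x \<in> X" for x
  proof
    assume "x \<in> sp (X - {x})"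
    then have "sp X \<subseteq> sp (X - {x})"
      using XP span_superset[of "X - {x}"] by (intro span_subset_span) auto
    then have "sp (X - {x}) = S" using X(3) span_mono[of "X - {x}" X] XP by blast
    then have "m + 1 \<le> card (X - {x})"
      using has_dim_card_spanning_set[OF S] X by blast
    then show False using X x by (simp add: card_Diff1_less)
  qed
  then have "indep X" unfolding independent_iff using XP by blast
  then show thesis using that X by blast
qed

lemma has_dim_span:
  assumes X: "indep X" "card X = m + 1"
  shows "hdim (sp X) m"
proof -
  have XP: "X \<subseteq> P" using X(1) by (rule independent_subset_P)
  have "m + 1 \<le> card X'" if "finite X'" "X' \<subseteq> sp X" "sp X' = sp X" for X'
  proof -
    have "X' \<subseteq> P" using that span_subset_P[OF XP] by blast
    moreover have "X \<subseteq> sp X'" using that span_superset[OF XP] by simp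
    ultimately show ?thesis using steinitz[OF X(1)] that X(2) by fastforce
  qed
  moreover have "\<exists>X'. finite X' \<and> X' \<subseteq> sp X \<and> sp X' = sp X \<and> card X' = m + 1"
    using span_superset[OF XP] independent_finite[OF X(1)] X(2) by blast
  ultimately show ?thesis
    unfolding ls_has_dim_def using span_subspace[OF XP] by blast
qed

lemma independent_card_eq_dim:
  assumes X: "indep X" and h: "hdim (sp X) m"
  shows "card X = m + 1"
proof -
  obtain Y where Y: "indep Y" "card Y = m + 1" "sp Y = sp X" using has_dim_independent_basis[OF h] .
  have XP: "X \<subseteq> P" and YP: "Y \<subseteq> P" using X Y(1) independent_subset_P by blast+
  have "card X \<le> card Y" using steinitz[OF X] Y(1,3) independent_finite YP span_superset[OF XP] by simp
  moreover have "card Y \<le> card X" using steinitz[OF Y(1)] Y(3) independent_finite[OF X] XP span_superset[OF YP] by simp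
  ultimately show ?thesis using Y(2) by simp
qed

lemma has_dim_unique:
  assumes a: "hdim S a" and b: "hdim S b"
  shows "a = b"
proof -
  obtain X where "finite X" "X \<subseteq> S" "sp X = S" "card X = a + 1"
    using has_dim_spanning_set[OF a] by blast
  moreover obtain Y where "finite Y" "Y \<subseteq> S" "sp Y = S" "card Y = b + 1"
    using has_dim_spanning_set[OF b] by blast
  ultimately show ?thesis
    using has_dim_card_spanning_set[OF a, of Y] has_dim_card_spanning_set[OF b, of X] by simp
qed

lemma has_dim_mono:
  assumes V: "hdim V a" and W: "hdim W b" and VW: "V \<subseteq> W"
  shows "a \<le> b"
proof -
  obtain I where I: "indep I" "card I = a + 1" "sp I = V" using has_dim_independent_basis[OF V] .
  obtain J where J: "indep J" "card J = b + 1" "sp J = W" using has_dim_independent_basis[OF W] .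
  have "I \<subseteq> sp J" using I J VW span_superset independent_subset_P by blast
  then have "card I \<le> card J" using steinitz I J independent_finite independent_subset_P by blast
  then show ?thesis using I J by simp
qed

lemma has_dim_le_card_spanning:
  assumes A: "hdim A m" and W: "finite W" "W \<subseteq> P" "A \<subseteq> sp W"
  shows "m + 1 \<le> card W"
proof -
  obtain I where I: "indep I" "card I = m + 1" "sp I = A" using has_dim_independent_basis[OF A] .
  then have "I \<subseteq> sp W" using W(3) span_superset independent_subset_P by blast
  then show ?thesis using steinitz[OF I(1) W(1,2)] I(2) by simp
qed

lemma independent_card_le_has_dim:
  assumes W: "indep W" "W \<subseteq> J" and J: "hdim J m"
  shows "card W \<le> m + 1"
proof -
  obtain K where K: "indep K" "card K = m + 1" "sp K = J" using has_dim_independent_basis[OF J] .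
  have "W \<subseteq> sp K" using W(2) K(3) by simp
  then show ?thesis using steinitz[OF W(1) independent_finite[OF K(1)] independent_subset_P[OF K(1)]] K(2)
    by simp
qed

lemma independent_insert_card:
  assumes "indep I" "p \<in> P" "p \<notin> sp I"
  shows "indep (insert p I)" "card (insert p I) = Suc (card I)"
proof -
  have "p \<notin> I" using assms(3) span_superset[OF independent_subset_P[OF assms(1)]] by blast
  then show "indep (insert p I)" "card (insert p I) = Suc (card I)"
    using independent_insert[OF assms] independent_finite[OF assms(1)] by simp_all
qed

lemma has_dim_subset_eq:
  assumes V: "hdim V m" and W: "hdim W m" and VW: "V \<subseteq> W"
  shows "V = W"
proof (rule ccontr)
  assume "V \<noteq> W"
  then obtain w where w: "w \<in> W" "w \<notin> V" using VW by blast
  obtain I where I: "indep I" "card I = m + 1" "sp I = V" using has_dim_independent_basis[OF V] .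
  have "w \<in> P" using w has_dim_subset_P[OF W] by blast
  then have "hdim (sp (insert w I)) (Suc m)"
    using independent_insert_card[OF I(1)] w I has_dim_span by simp
  moreover have "I \<subseteq> V" using I span_superset independent_subset_P by blast
  then have "sp (insert w I) \<subseteq> W"
    using VW w by (intro span_minimal[OF has_dim_subspace[OF W]]) blast
  ultimately have "Suc m \<le> m" using has_dim_mono[OF _ W] by blast
  then show False by simp
qed

lemma span_insert_eq_has_dim_Suc:
  assumes Y: "indep Y" "card Y = m + 1" and V: "hdim V (Suc m)" "sp Y \<subseteq> V"
    and a: "a \<in> V" "a \<notin> sp Y"
  shows "sp (insert a Y) = V"
proof -
  have "a \<in> P" using a has_dim_subset_P[OF V(1)] by blast
  then have "hdim (sp (insert a Y)) (Suc m)"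
    using independent_insert_card[OF Y(1)] a Y has_dim_span by simp
  moreover have "Y \<subseteq> V" using Y V span_superset independent_subset_P by blast
  then have "sp (insert a Y) \<subseteq> V"
    using a by (intro span_minimal[OF has_dim_subspace[OF V(1)]]) blast
  ultimately show ?thesis using has_dim_subset_eq[OF _ V(1)] by blast
qed

lemma has_dim_between_eq:
  assumes A: "hdim A m" and W: "hdim W (Suc m)" and V: "subsp V" "A \<subset> V" "V \<subseteq> W"
  shows "V = W"
proof -
  obtain v where v: "v \<in> V" "v \<notin> A" using V by blast
  obtain I where I: "indep I" "card I = m + 1" "sp I = A" using has_dim_independent_basis[OF A] .
  have "sp (insert v I) = W" using span_insert_eq_has_dim_Suc[OF I(1,2) W] I(3) V v by blast
  moreover have "I \<subseteq> V" using I V span_superset independent_subset_P by blast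
  then have "sp (insert v I) \<subseteq> V" using span_minimal[OF V(1)] v by blast
  ultimately show ?thesis using V by blast
qed

lemma independent_extend_to_base:
  assumes "indep I"
  shows "\<exists>B. ls_base P L B \<and> I \<subseteq> B"
  using assms
proof (induction "n + 1 - card I" arbitrary: I rule: less_induct)
  case less
  show ?case
  proof (cases "sp I = P")
    case True
    then show ?thesis using less.prems unfolding ls_base_def by blast
  next
    case False
    then obtain s where s: "s \<in> P" "s \<notin> sp I"
      using span_subset_P[OF independent_subset_P[OF less.prems]] by blast
    note ins = independent_insert_card[OF less.prems s]
    have "n + 1 - card (insert s I) < n + 1 - card I"
      using ins independent_card_le[OF ins(1)] by simp
    then show ?thesis using less.hyps ins(1) by blast
  qed
qed

lemma adapted_base:
  assumes "hdim S m"
  obtains B Y where "ls_base P L B" "Y \<subseteq> B" "card Y = m + 1" "sp Y = S"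
proof -
  obtain Y where Y: "indep Y" "card Y = m + 1" "sp Y = S" using has_dim_independent_basis[OF assms] .
  then obtain B where "ls_base P L B" "Y \<subseteq> B" using independent_extend_to_base by blast
  then show thesis using that Y by blast
qed

lemma star_members_in_common_base:
  assumes S: "hdim S m" and U: "hdim U (Suc m)" "S \<subseteq> U" and W: "hdim W (Suc m)" "S \<subseteq> W"
    and UW: "U \<noteq> W"
  obtains B Z1 Z2 where "ls_base P L B" "Z1 \<subseteq> B" "Z2 \<subseteq> B" "card Z1 = m + 2" "card Z2 = m + 2"
    "card (Z1 \<inter> Z2) = m + 1" "U = sp Z1" "W = sp Z2"
proof -
  obtain Y where Y: "indep Y" "card Y = m + 1" "sp Y = S" using has_dim_independent_basis[OF S] .
  have YS: "Y \<subseteq> S" using Y span_superset independent_subset_P by blast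
  have member: "\<exists>a\<in>V. a \<notin> S \<and> V = sp (insert a Y)" if V: "hdim V (Suc m)" "S \<subseteq> V" for V
  proof -
    have "V \<noteq> S" using has_dim_unique[OF S] V(1) by force
    then obtain a where "a \<in> V" "a \<notin> S" using V(2) by blast
    then show ?thesis using span_insert_eq_has_dim_Suc[OF Y(1,2) V(1)] Y(3) V(2) by blast
  qed
  obtain a b where a: "a \<in> U" "a \<notin> S" "U = sp (insert a Y)" and b: "b \<in> W" "b \<notin> S" "W = sp (insert b Y)"
    using member U W by metis
  have "b \<notin> U"
  proof
    assume "b \<in> U"
    then have "W \<subseteq> U" using b YS U span_minimal[OF has_dim_subspace[OF U(1)]] by blast
    then show False using has_dim_subset_eq[OF W(1) U(1)] UW by blast
  qed
  have "a \<in> P" "b \<in> P" using a b U W has_dim_subset_P by blast+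
  then have "indep (insert b (insert a Y))"
    using independent_insert_card(1)[OF independent_insert_card(1)[OF Y(1)]] a b \<open>b \<notin> U\<close> Y by simp
  then obtain B where B: "ls_base P L B" "insert b (insert a Y) \<subseteq> B"
    using independent_extend_to_base by blast
  have "a \<noteq> b" "a \<notin> Y" "b \<notin> Y" using a b YS \<open>b \<notin> U\<close> by blast+
  moreover have "finite Y" using independent_finite[OF Y(1)] .
  moreover have "insert a Y \<inter> insert b Y = Y" using \<open>a \<noteq> b\<close> \<open>a \<notin> Y\<close> \<open>b \<notin> Y\<close> by blast
  ultimately have "card (insert a Y) = m + 2" "card (insert b Y) = m + 2"
    "card (insert a Y \<inter> insert b Y) = m + 1" using Y(2) by simp_all
  then show thesis using that[of B "insert a Y" "insert b Y"] B a b by blast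
qed

lemma Grass_inc_below:
  assumes "hdim S m" "m < k"
  shows "U \<in> Grass_inc P L k S \<longleftrightarrow> hdim U k \<and> S \<subseteq> U"
  using assms has_dim_mono[of U k S m] unfolding Grass_inc_def Grass_def by auto

lemma Grass_inc_above:
  assumes "hdim S m" "k < m"
  shows "U \<in> Grass_inc P L k S \<longleftrightarrow> hdim U k \<and> U \<subseteq> S"
  using assms has_dim_mono[of S m U k] unfolding Grass_inc_def Grass_def by auto

end

section \<open>Base subsets\<close>

definition base_subset_ij :: "'p set \<Rightarrow> 'p set set \<Rightarrow> nat \<Rightarrow> 'p set \<Rightarrow> 'p \<Rightarrow> 'p \<Rightarrow> 'p set set" where
  "base_subset_ij P L k B i j = {U \<in> base_subset P L k B. i \<in> U \<and> j \<notin> U}"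

lemma base_subset_Grass: "base_subset P L k B \<subseteq> Grass P L k"
  unfolding base_subset_def by blast

lemma base_subset_ij_subset: "base_subset_ij P L k B i j \<subseteq> base_subset P L k B"
  unfolding base_subset_ij_def by blast

context fin_dim_space
begin

lemma base_card:
  assumes "ls_base P L B"
  shows "finite B" "card B = n + 1"
  using assms independent_finite independent_card_eq_dim dim_P unfolding ls_base_def by auto

lemma base_subset_iff:
  assumes B: "ls_base P L B"
  shows "U \<in> base_subset P L k B \<longleftrightarrow> (\<exists>Z. Z \<subseteq> B \<and> card Z = k + 1 \<and> U = sp Z)"
proof -
  have BI: "indep B" using B unfolding ls_base_def by blast
  have "card Z = k + 1 \<longleftrightarrow> hdim (sp Z) k" if "Z \<subseteq> B" for Z
    using independent_mono[OF BI that] has_dim_span independent_card_eq_dim by blast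
  then show ?thesis unfolding base_subset_def Grass_def by blast
qed

lemma base_subset_span_Int:
  assumes B: "ls_base P L B" and U: "U \<in> base_subset P L k B"
  shows "U = sp (B \<inter> U)" "card (B \<inter> U) = k + 1"
proof -
  obtain Z where Z: "Z \<subseteq> B" "card Z = k + 1" "U = sp Z"
    using U unfolding base_subset_iff[OF B] by blast
  have "B \<inter> U = Z"
    unfolding Z(3) using B Z(1) independent_Int_span unfolding ls_base_def by blast
  then show "U = sp (B \<inter> U)" "card (B \<inter> U) = k + 1" using Z by simp_all
qed

lemma finite_base_subset:
  assumes B: "ls_base P L B"
  shows "finite (base_subset P L k B)"
proof -
  have "base_subset P L k B \<subseteq> sp ` Pow B"
  proof
    fix U assume "U \<in> base_subset P L k B"
    then obtain Z where "Z \<subseteq> B" "U = sp Z" unfolding base_subset_iff[OF B] by blast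
    then show "U \<in> sp ` Pow B" by blast
  qed
  then show ?thesis using base_card(1)[OF B] finite_subset by blast
qed

lemma span_insert_in_base_subset:
  assumes B: "ls_base P L B" and Y: "Y \<subseteq> B" and a: "a \<in> B" "a \<notin> Y"
  shows "sp (insert a Y) \<in> base_subset P L (card Y) B" "sp Y \<subseteq> sp (insert a Y)"
    "B \<inter> sp (insert a Y) = insert a Y"
proof -
  have BI: "indep B" using B unfolding ls_base_def by blast
  have "finite Y" using Y base_card(1)[OF B] finite_subset by blast
  then have "card (insert a Y) = card Y + 1" using a(2) by simp
  moreover have aY: "insert a Y \<subseteq> B" using Y a(1) by blast
  ultimately show "sp (insert a Y) \<in> base_subset P L (card Y) B"
    unfolding base_subset_iff[OF B] by blast
  show "sp Y \<subseteq> sp (insert a Y)"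
    using aY independent_subset_P[OF BI] by (intro span_mono) auto
  show "B \<inter> sp (insert a Y) = insert a Y"
    using aY by (rule independent_Int_span[OF BI])
qed

lemma span_in_base_subset_ij:
  assumes B: "ls_base P L B" and Z: "Z \<subseteq> B" "card Z = k + 1" and i: "i \<in> Z" and j: "j \<in> B - Z"
  shows "sp Z \<in> base_subset_ij P L k B i j"
proof -
  have BI: "indep B" using B unfolding ls_base_def by blast
  have "Z \<subseteq> P" using Z(1) independent_subset_P[OF BI] by blast
  then have "i \<in> sp Z" using i span_superset by blast
  moreover have "j \<notin> sp Z" using independent_Int_span[OF BI Z(1)] j by blast
  moreover have "sp Z \<in> base_subset P L k B" using base_subset_iff[OF B] Z by blast
  ultimately show ?thesis by (simp add: base_subset_ij_def)
qed

lemma base_subset_ij_span_iff: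
  assumes B: "ls_base P L B" and Z: "Z \<subseteq> B" "card Z = k + 1" and ij: "i \<in> B" "j \<in> B"
  shows "sp Z \<in> base_subset_ij P L k B i j \<longleftrightarrow> i \<in> Z \<and> j \<notin> Z"
proof
  assume "sp Z \<in> base_subset_ij P L k B i j"
  then have "i \<in> sp Z" "j \<notin> sp Z" by (simp_all add: base_subset_ij_def)
  moreover have "B \<inter> sp Z = Z" using B Z independent_Int_span unfolding ls_base_def by blast
  ultimately show "i \<in> Z \<and> j \<notin> Z" using ij by blast
next
  assume "i \<in> Z \<and> j \<notin> Z"
  then show "sp Z \<in> base_subset_ij P L k B i j" using span_in_base_subset_ij[OF B Z] ij by blast
qed

lemma card_base_subset_ij:
  assumes B: "ls_base P L B" and ij: "i \<in> B" "j \<in> B" "i \<noteq> j"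
  shows "card (base_subset_ij P L k B i j) = (n - 1) choose k"
proof -
  have BI: "indep B" using B unfolding ls_base_def by blast
  note fB = base_card[OF B]
  define Q where "Q = {Z. Z \<subseteq> B - {i, j} \<and> card Z = k}"
  have insert_i: "insert i Z \<subseteq> B" "card (insert i Z) = k + 1" if "Z \<in> Q" for Z
  proof -
    have "finite Z" "i \<notin> Z" "Z \<subseteq> B" using that fB(1) finite_subset unfolding Q_def by blast+
    then show "insert i Z \<subseteq> B" "card (insert i Z) = k + 1" using that ij unfolding Q_def by simp_all
  qed
  have "base_subset_ij P L k B i j = (\<lambda>Z. sp (insert i Z)) ` Q"
  proof
    show "base_subset_ij P L k B i j \<subseteq> (\<lambda>Z. sp (insert i Z)) ` Q"
    proof
      fix U assume U: "U \<in> base_subset_ij P L k B i j"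
      then have "U \<in> base_subset P L k B" by (simp add: base_subset_ij_def)
      note r = base_subset_span_Int[OF B this]
      have i: "i \<in> B \<inter> U" and "j \<notin> B \<inter> U" using U ij unfolding base_subset_ij_def by blast+
      then have "B \<inter> U - {i} \<in> Q" using r(2) fB(1) unfolding Q_def by auto
      moreover have "U = sp (insert i (B \<inter> U - {i}))" using r(1) i by (simp add: insert_absorb)
      ultimately show "U \<in> (\<lambda>Z. sp (insert i Z)) ` Q" by blast
    qed
    show "(\<lambda>Z. sp (insert i Z)) ` Q \<subseteq> base_subset_ij P L k B i j"
    proof
      fix U assume "U \<in> (\<lambda>Z. sp (insert i Z)) ` Q"
      then obtain Z where Z: "Z \<in> Q" "U = sp (insert i Z)" by blast
      have "j \<in> B - insert i Z" using Z(1) ij unfolding Q_def by blast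
      then show "U \<in> base_subset_ij P L k B i j"
        using span_in_base_subset_ij[OF B insert_i[OF Z(1)]] Z(2) by blast
    qed
  qed
  moreover have "inj_on (\<lambda>Z. sp (insert i Z)) Q"
  proof
    fix Z1 Z2 assume Z: "Z1 \<in> Q" "Z2 \<in> Q" "sp (insert i Z1) = sp (insert i Z2)"
    have "insert i Z1 = B \<inter> sp (insert i Z1)" using independent_Int_span[OF BI insert_i(1)[OF Z(1)]] by simp
    also have "\<dots> = insert i Z2" using independent_Int_span[OF BI insert_i(1)[OF Z(2)]] Z(3) by simp
    finally have "insert i Z1 = insert i Z2" .
    moreover have "i \<notin> Z1" "i \<notin> Z2" using Z unfolding Q_def by blast+
    ultimately show "Z1 = Z2" by (metis Diff_insert_absorb)
  qed
  ultimately have "card (base_subset_ij P L k B i j) = card Q" by (simp add: card_image)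
  also have "\<dots> = card (B - {i, j}) choose k" unfolding Q_def by (rule n_subsets) (use fB in simp)
  also have "card (B - {i, j}) = n - 1" using fB ij by (simp add: card_Diff_subset)
  finally show ?thesis .
qed

lemma base_minus_three_subset:
  assumes B: "ls_base P L B" and m: "m + 2 \<le> n"
  obtains Z where "Z \<subseteq> B - {a, b, c}" "card Z = m" "finite Z"
proof -
  have "card {a, b, c} \<le> 3" by (simp add: card_insert_if)
  then have "n - 2 \<le> card (B - {a, b, c})"
    using diff_card_le_card_Diff[of "{a, b, c}" B] base_card[OF B] by simp
  then have "m \<le> card (B - {a, b, c})" using m by linarith
  then show thesis using obtain_subset_with_card_n that by metis
qed

lemma base_subset_ij_inj:
  assumes B: "ls_base P L B" and ij: "i \<in> B" "j \<in> B" "i \<noteq> j" and ij': "i' \<in> B" "j' \<in> B" "i' \<noteq> j'"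
    and k: "1 \<le> k" "k + 2 \<le> n"
    and eq: "base_subset_ij P L k B i j = base_subset_ij P L k B i' j'"
  shows "i = i' \<and> j = j'"
proof (cases "i = i'")
  case False
  obtain Z where Z: "Z \<subseteq> B - {i, j, i'}" "card Z = k" "finite Z"
    using base_minus_three_subset[OF B k(2)] .
  have "i \<notin> Z" using Z by blast
  then have Z': "insert i Z \<subseteq> B" "card (insert i Z) = k + 1" using Z ij by auto
  have "sp (insert i Z) \<in> base_subset_ij P L k B i j"
    using Z ij by (intro span_in_base_subset_ij[OF B Z']) auto
  then have "i' \<in> insert i Z" using eq base_subset_ij_span_iff[OF B Z' ij'(1,2)] by simp
  then show ?thesis using Z False by blast
next
  case True
  show ?thesis
  proof (rule ccontr)
    assume "\<not> (i = i' \<and> j = j')"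
    then have jj: "j \<noteq> j'" using True by blast
    have "k - 1 + 2 \<le> n" using k by simp
    then obtain Z where Z: "Z \<subseteq> B - {i, j, j'}" "card Z = k - 1" "finite Z"
      by (rule base_minus_three_subset[OF B])
    define Z' where "Z' = insert i (insert j' Z)"
    have "i \<notin> insert j' Z" "j' \<notin> Z" using Z True ij' by auto
    then have Z': "Z' \<subseteq> B" "card Z' = k + 1" using Z ij ij' k unfolding Z'_def by auto
    have "sp Z' \<in> base_subset_ij P L k B i j"
      using Z ij jj by (intro span_in_base_subset_ij[OF B Z']) (auto simp: Z'_def)
    then have "j' \<notin> Z'" using eq base_subset_ij_span_iff[OF B Z' ij'(1,2)] by simp
    then show False unfolding Z'_def by blast
  qed
qed

lemma Inter_base_subset:
  assumes B: "ls_base P L B" and Y: "\<Y> \<subseteq> base_subset P L k B" "\<Y> \<noteq> {}"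
  shows "\<Inter>\<Y> = sp (\<Inter>U\<in>\<Y>. B \<inter> U)"
proof -
  have BI: "indep B" using B unfolding ls_base_def by blast
  have "finite \<Y>" using Y(1) finite_base_subset[OF B] finite_subset by blast
  then have "\<Inter>(sp ` (\<lambda>U. B \<inter> U) ` \<Y>) = sp (\<Inter>((\<lambda>U. B \<inter> U) ` \<Y>))"
    using Y(2) by (intro span_Inter_independent[OF BI base_card(1)[OF B]]) auto
  moreover have "sp (B \<inter> U) = U" if "U \<in> \<Y>" for U
    using base_subset_span_Int(1)[OF B] Y(1) that by blast
  then have "sp ` (\<lambda>U. B \<inter> U) ` \<Y> = \<Y>" by (simp add: image_image)
  ultimately show ?thesis by simp
qed

lemma Inter_base_subset_singleton:
  assumes B: "ls_base P L B" and Y: "\<Y> \<subseteq> base_subset P L k B" "\<Y> \<noteq> {}" and b: "\<Inter>\<Y> = {b}"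
  shows "b \<in> B"
proof -
  define T where "T = (\<Inter>U\<in>\<Y>. B \<inter> U)"
  have spT: "sp T = {b}" unfolding T_def using Inter_base_subset[OF B Y] b by simp
  have TB: "T \<subseteq> B" unfolding T_def using Y(2) by blast
  then have "T \<subseteq> P" using B independent_subset_P unfolding ls_base_def by blast
  then have "T \<subseteq> {b}" using spT span_superset by blast
  moreover have "T \<noteq> {}" using spT span_empty by auto
  ultimately show "b \<in> B" using TB by blast
qed

lemma base_subset_eq_if_meets_all_ij:
  assumes B: "ls_base P L B" and B3: "ls_base P L B3" and n: "1 \<le> n"
    and X: "\<X> \<subseteq> base_subset P L k B" "\<X> \<subseteq> base_subset P L k B3"
    and meets: "\<forall>i\<in>B. \<forall>j\<in>B. i \<noteq> j \<longrightarrow> \<X> \<inter> base_subset_ij P L k B i j \<noteq> {}"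
  shows "base_subset P L k B3 = base_subset P L k B"
proof -
  have "b \<in> B3" if b: "b \<in> B" for b
  proof -
    define Xb where "Xb = {U \<in> \<X>. b \<in> U}"
    have separated: "\<exists>U\<in>Xb. x \<notin> U" if x: "x \<in> B" "x \<noteq> b" for x
    proof -
      have "\<X> \<inter> base_subset_ij P L k B b x \<noteq> {}" using meets b x by simp
      then obtain U where "U \<in> \<X>" "b \<in> U" "x \<notin> U" unfolding base_subset_ij_def by blast
      then show ?thesis unfolding Xb_def by blast
    qed
    have "card (B - {b}) = n" using base_card[OF B] b by simp
    then have "B - {b} \<noteq> {}" using n by (metis card.empty not_one_le_zero)
    then have Xb: "Xb \<noteq> {}" using separated by blast
    have XbB: "Xb \<subseteq> base_subset P L k B" "Xb \<subseteq> base_subset P L k B3"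
      using X unfolding Xb_def by blast+
    have "(\<Inter>U\<in>Xb. B \<inter> U) \<subseteq> {b}"
    proof
      fix x assume "x \<in> (\<Inter>U\<in>Xb. B \<inter> U)"
      then show "x \<in> {b}" using separated Xb by blast
    qed
    moreover have "b \<in> (\<Inter>U\<in>Xb. B \<inter> U)" using b unfolding Xb_def by blast
    ultimately have "(\<Inter>U\<in>Xb. B \<inter> U) = {b}" by blast
    moreover have "b \<in> P" using B b independent_subset_P unfolding ls_base_def by blast
    ultimately have "\<Inter>Xb = {b}" using Inter_base_subset[OF B XbB(1) Xb] span_singleton by simp
    then show "b \<in> B3" by (rule Inter_base_subset_singleton[OF B3 XbB(2) Xb])
  qed
  then have "B \<subseteq> B3" by blast
  moreover have "sp B = sp B3" using B B3 unfolding ls_base_def by simp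
  moreover have "\<forall>Y. Y \<subset> B3 \<longrightarrow> sp Y \<noteq> sp B3"
    using B3 unfolding ls_base_def ls_independent_def by blast
  ultimately have "B = B3" by blast
  then show ?thesis by simp
qed

lemma base_exchange:
  assumes B: "ls_base P L B" and i: "i \<in> B" and c: "c \<in> P" "c \<notin> sp (B - {i})"
  shows "ls_base P L (insert c (B - {i}))"
proof -
  have BI: "indep B" using B unfolding ls_base_def by blast
  have X0P: "B - {i} \<subseteq> P" and iP: "i \<in> P" using i independent_subset_P[OF BI] by blast+
  have B2P: "insert c (B - {i}) \<subseteq> P" using X0P c by blast
  have "c \<in> sp (insert i (B - {i}))" using B c i unfolding ls_base_def by (simp add: insert_absorb)
  then have "i \<in> sp (insert c (B - {i}))"
    using exchange[OF X0P iP independent_not_in_span[OF BI i] c] by blast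
  then have "B \<subseteq> sp (insert c (B - {i}))" using span_superset[OF B2P] by blast
  then have "sp B \<subseteq> sp (insert c (B - {i}))" using B2P by (rule span_subset_span)
  then have "sp (insert c (B - {i})) = P" using B span_subset_P[OF B2P] unfolding ls_base_def by blast
  moreover have "indep (insert c (B - {i}))"
    using independent_insert[OF independent_mono[OF BI] c] by blast
  ultimately show ?thesis unfolding ls_base_def by blast
qed

lemma point_of_pair_span_notin_span:
  assumes B: "ls_base P L B" and ij: "i \<in> B" "j \<in> B" and c: "c \<noteq> i" "c \<noteq> j" "c \<in> sp {i, j}"
    and Z: "Z \<subseteq> B" "\<not> {i, j} \<subseteq> Z"
  shows "c \<notin> sp Z"
proof
  assume "c \<in> sp Z"
  have BI: "indep B" using B unfolding ls_base_def by blast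
  have "{i, j} \<subseteq> B" using ij by blast
  then have "c \<in> sp (Z \<inter> {i, j})"
    using \<open>c \<in> sp Z\<close> c(3) span_Int_independent[OF BI base_card(1)[OF B] Z(1)] by blast
  moreover obtain x where "x \<in> {i, j}" "Z \<inter> {i, j} \<subseteq> {x}" using Z(2) by blast
  moreover have "x \<in> P" "c \<noteq> x" using \<open>x \<in> {i, j}\<close> ij c(1,2) independent_subset_P[OF BI] by blast+
  ultimately show False using span_mono[of "Z \<inter> {i, j}" "{x}"] span_singleton by blast
qed

context
  fixes B i j c
  assumes B: "ls_base P L B" and ij: "i \<in> B" "j \<in> B" "i \<noteq> j"
    and c: "c \<in> P" "c \<noteq> i" "c \<noteq> j" "c \<in> sp {i, j}" "i \<in> sp {c, j}"
begin

lemma third_point_notin_base: "c \<notin> B"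
proof
  assume "c \<in> B"
  then have "c \<notin> sp {c}" using point_of_pair_span_notin_span[OF B ij(1,2) c(2-4)] c(2) by blast
  then show False using span_singleton[OF c(1)] by blast
qed

lemma base_exchange_third_point: "ls_base P L (insert c (B - {i}))"
  using point_of_pair_span_notin_span[OF B ij(1,2) c(2-4), of "B - {i}"]
  by (intro base_exchange[OF B ij(1) c(1)]) blast

lemma base_subset_minus_ij_subset_exchanged:
  "base_subset P L k B - base_subset_ij P L k B i j \<subseteq> base_subset P L k (insert c (B - {i}))"
proof
  fix U assume U: "U \<in> base_subset P L k B - base_subset_ij P L k B i j"
  define Z where "Z = B \<inter> U"
  have Z: "U = sp Z" "card Z = k + 1" "Z \<subseteq> B"
    using base_subset_span_Int[OF B] U Z_def by auto
  note iff = base_subset_iff[OF base_exchange_third_point]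
  show "U \<in> base_subset P L k (insert c (B - {i}))"
  proof (cases "i \<in> Z")
    case False
    then have "Z \<subseteq> insert c (B - {i})" using Z(3) by blast
    then show ?thesis unfolding iff using Z by blast
  next
    case True
    then have "j \<in> Z" using U Z_def ij unfolding base_subset_ij_def by blast
    define Z2 where "Z2 = insert c (Z - {i})"
    have BP: "B \<subseteq> P" using B independent_subset_P unfolding ls_base_def by blast
    have ZP: "Z \<subseteq> P" and Z2P: "Z2 \<subseteq> P" using Z(3) BP c(1) Z2_def by blast+
    have "c \<notin> Z" using Z(3) third_point_notin_base by blast
    moreover have "finite Z" using Z(3) base_card(1)[OF B] finite_subset by blast
    ultimately have "card Z2 = k + 1" using Z2_def Z(2) True by (simp add: card_Diff_singleton)
    have "sp {i, j} \<subseteq> sp Z" using True \<open>j \<in> Z\<close> ZP by (intro span_mono) auto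
    then have "Z2 \<subseteq> sp Z" using c(4) Z2_def span_superset[OF ZP] by blast
    then have "sp Z2 \<subseteq> sp Z" using ZP by (rule span_subset_span)
    moreover have "sp {c, j} \<subseteq> sp Z2" using \<open>j \<in> Z\<close> c(3) Z2_def ij Z2P by (intro span_mono) auto
    then have "Z \<subseteq> sp Z2" using c(5) Z2_def span_superset[OF Z2P] by blast
    then have "sp Z \<subseteq> sp Z2" using Z2P by (rule span_subset_span)
    moreover have "Z2 \<subseteq> insert c (B - {i})" using Z2_def Z(3) by blast
    ultimately show ?thesis unfolding iff using Z \<open>card Z2 = k + 1\<close> by blast
  qed
qed

lemma base_subset_exchanged_ne:
  assumes k: "k + 1 \<le> n"
  shows "base_subset P L k (insert c (B - {i})) \<noteq> base_subset P L k B"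
proof
  define B2 where "B2 = insert c (B - {i})"
  assume "base_subset P L k (insert c (B - {i})) = base_subset P L k B"
  then have eq: "base_subset P L k B2 = base_subset P L k B" unfolding B2_def .
  have B2: "ls_base P L B2" unfolding B2_def by (rule base_exchange_third_point)
  have B2I: "indep B2" using B2 unfolding ls_base_def by blast
  have "card (B - {i, j}) = n - 1" using base_card[OF B] ij by (simp add: card_Diff_subset)
  then have "k \<le> card (B - {i, j})" using k by simp
  then obtain Y where Y: "Y \<subseteq> B - {i, j}" "card Y = k" "finite Y"
    by (rule obtain_subset_with_card_n)
  define V where "V = sp (insert c Y)"
  have cY: "c \<notin> Y" using Y third_point_notin_base by blast
  have YB2: "insert c Y \<subseteq> B2" using Y unfolding B2_def by blast
  have "card (insert c Y) = k + 1" using Y cY by simp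
  then have "V \<in> base_subset P L k B2"
    unfolding V_def base_subset_iff[OF B2] using YB2 by blast
  then have V: "V \<in> base_subset P L k B" using eq by simp
  have "c \<in> V" using V_def span_superset YB2 independent_subset_P[OF B2I] by blast
  then have "j \<in> B \<inter> V"
    using point_of_pair_span_notin_span[OF B ij(1,2) c(2-4), of "B \<inter> V"]
      base_subset_span_Int(1)[OF B V] by auto
  moreover have "B2 \<inter> V = insert c Y" using independent_Int_span[OF B2I YB2] V_def by simp
  moreover have "j \<in> B2" using ij unfolding B2_def by blast
  ultimately have "j \<in> insert c Y" by blast
  then show False using Y c(3) by blast
qed

end

lemma base_subset_minus_ij_in_other_base_subset:
  assumes B: "ls_base P L B" and P2: "axiom_P2 L" and ij: "i \<in> B" "j \<in> B" "i \<noteq> j"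
    and k: "k + 1 \<le> n"
  obtains B2 where "ls_base P L B2" "base_subset P L k B - base_subset_ij P L k B i j \<subseteq> base_subset P L k B2"
    "base_subset P L k B2 \<noteq> base_subset P L k B"
proof -
  have "i \<in> P" "j \<in> P" using B ij independent_subset_P unfolding ls_base_def by blast+
  then obtain c where c: "c \<in> P" "c \<noteq> i" "c \<noteq> j" "c \<in> sp {i, j}" "i \<in> sp {c, j}"
    using line_third_point[OF P2 _ _ ij(3)] by blast
  show thesis
    using that[OF base_exchange_third_point[OF B ij c] base_subset_minus_ij_subset_exchanged[OF B ij c]
        base_subset_exchanged_ne[OF B ij c k]] .
qed

end

section \<open>Adjacency\<close>

definition ls_adjacent :: "'p set \<Rightarrow> 'p set set \<Rightarrow> nat \<Rightarrow> 'p set \<Rightarrow> 'p set \<Rightarrow> bool" where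
  "ls_adjacent P L k V W \<longleftrightarrow>
     ls_has_dim P L (V \<inter> W) (k - 1) \<and> ls_has_dim P L (ls_span P L (V \<union> W)) (k + 1)"

context fin_dim_space
begin

lemma adjacent_spans_in_base:
  assumes B: "ls_base P L B" and Z: "Z1 \<subseteq> B" "Z2 \<subseteq> B" "card Z1 = k + 1" "card Z2 = k + 1"
    and c: "card (Z1 \<inter> Z2) = k" and k: "1 \<le> k"
  shows "ls_adjacent P L k (sp Z1) (sp Z2)"
proof -
  have BI: "indep B" using B unfolding ls_base_def by blast
  have ZP: "Z1 \<subseteq> P" "Z2 \<subseteq> P" using Z independent_subset_P[OF BI] by blast+
  have fZ: "finite Z1" "finite Z2" using Z base_card(1)[OF B] finite_subset by blast+
  have "sp Z1 \<inter> sp Z2 = sp (Z1 \<inter> Z2)"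
    using span_Int_independent[OF BI base_card(1)[OF B] Z(1,2)] .
  moreover have "card (Z1 \<inter> Z2) = (k - 1) + 1" using c k by simp
  then have "hdim (sp (Z1 \<inter> Z2)) (k - 1)"
    using has_dim_span[OF independent_mono[OF BI]] Z(1) by blast
  moreover have "card (Z1 \<union> Z2) = (k + 1) + 1"
    using card_Un_Int[OF fZ] Z c by simp
  then have "hdim (sp (Z1 \<union> Z2)) (k + 1)"
    using has_dim_span[OF independent_mono[OF BI]] Z(1,2) by blast
  ultimately show ?thesis unfolding ls_adjacent_def using span_Un_span[OF ZP] by simp
qed

lemma adjacent_triple:
  assumes k: "1 \<le> k" and V3: "hdim V3 k"
    and a: "ls_adjacent P L k V1 V2" "ls_adjacent P L k V1 V3" "ls_adjacent P L k V2 V3"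
    and V12: "V1 \<subseteq> P" "V2 \<subseteq> P" and nsub: "\<not> V1 \<inter> V2 \<subseteq> V3"
  shows "V3 \<subseteq> sp (V1 \<union> V2)"
proof -
  have h12: "hdim (V1 \<inter> V2) (k - 1)" and h13: "hdim (V1 \<inter> V3) (k - 1)"
    and h23: "hdim (V2 \<inter> V3) (k - 1)" using a unfolding ls_adjacent_def by blast+
  have "V1 \<inter> V3 \<noteq> V2 \<inter> V3"
  proof
    assume "V1 \<inter> V3 = V2 \<inter> V3"
    then have "V1 \<inter> V3 = V1 \<inter> V2" using has_dim_subset_eq[OF h13 h12] by blast
    then show False using nsub by blast
  qed
  then have ne: "\<not> V2 \<inter> V3 \<subseteq> V1 \<inter> V3" using has_dim_subset_eq[OF h23 h13] by blast
  have V3P: "V3 \<subseteq> P" using has_dim_subset_P[OF V3] .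
  define M where "M = sp ((V1 \<inter> V3) \<union> (V2 \<inter> V3))"
  have MP: "(V1 \<inter> V3) \<union> (V2 \<inter> V3) \<subseteq> P" using V3P by blast
  have "V1 \<inter> V3 \<subset> M" using ne span_superset[OF MP] unfolding M_def by blast
  moreover have "M \<subseteq> V3" unfolding M_def by (rule span_minimal[OF has_dim_subspace[OF V3]]) blast
  moreover have "hdim V3 (Suc (k - 1))" using V3 k by simp
  ultimately have "M = V3" using has_dim_between_eq[OF h13] span_subspace[OF MP] M_def by blast
  moreover have "M \<subseteq> sp (V1 \<union> V2)" unfolding M_def using V12 by (intro span_mono) auto
  ultimately show ?thesis by simp
qed

lemma pairwise_adjacent_star_or_top:
  assumes k: "1 \<le> k" and VV: "\<forall>V\<in>\<V>. hdim V k"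
    and pw: "\<forall>V\<in>\<V>. \<forall>W\<in>\<V>. V \<noteq> W \<longrightarrow> ls_adjacent P L k V W"
    and V12: "V1 \<in> \<V>" "V2 \<in> \<V>" "V1 \<noteq> V2"
  shows "(\<forall>V\<in>\<V>. V1 \<inter> V2 \<subseteq> V) \<or> (\<forall>V\<in>\<V>. V \<subseteq> sp (V1 \<union> V2))"
proof (rule ccontr)
  assume "\<not> ?thesis"
  then obtain V3 V4 where V3: "V3 \<in> \<V>" "\<not> V1 \<inter> V2 \<subseteq> V3"
    and V4: "V4 \<in> \<V>" "\<not> V4 \<subseteq> sp (V1 \<union> V2)" by blast
  define J where "J = sp (V1 \<union> V2)"
  have VP: "V \<subseteq> P" if "V \<in> \<V>" for V using VV that has_dim_subset_P by blast
  have V1J: "V1 \<subseteq> J" and V2J: "V2 \<subseteq> J"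
    using span_superset[of "V1 \<union> V2"] VP V12 unfolding J_def by blast+
  have d13: "V1 \<noteq> V3" and d23: "V2 \<noteq> V3" using V3 by blast+
  have V3J: "V3 \<subseteq> J"
    unfolding J_def using V3 V12 d13 d23 pw VV VP by (intro adjacent_triple[OF k]) blast+
  have d14: "V1 \<noteq> V4" and d24: "V2 \<noteq> V4" and d34: "V3 \<noteq> V4"
    using V4 V1J V2J V3J J_def by blast+
  have "V1 \<inter> V2 \<subseteq> V4"
  proof (rule ccontr)
    assume "\<not> V1 \<inter> V2 \<subseteq> V4"
    then have "V4 \<subseteq> J"
      unfolding J_def using V4 V12 d14 d24 pw VV VP by (intro adjacent_triple[OF k]) blast+
    then show False using V4 J_def by blast
  qed
  moreover have "V1 \<inter> V3 \<subseteq> V4"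
  proof (rule ccontr)
    assume "\<not> V1 \<inter> V3 \<subseteq> V4"
    then have "V4 \<subseteq> sp (V1 \<union> V3)"
      using V3 V4 V12 d13 d14 d34 pw VV VP by (intro adjacent_triple[OF k]) blast+
    moreover have "sp (V1 \<union> V3) \<subseteq> J"
      unfolding J_def using V1J V3J V12 V3 VP J_def by (intro span_subset_span) auto
    ultimately show False using V4 J_def by blast
  qed
  moreover have "hdim (V1 \<inter> V4) (k - 1)" "hdim (V1 \<inter> V2) (k - 1)" "hdim (V1 \<inter> V3) (k - 1)"
    using pw V12 V3 V4 d13 d14 unfolding ls_adjacent_def by blast+
  ultimately have "V1 \<inter> V2 = V1 \<inter> V3" using has_dim_subset_eq by blast
  then show False using V3 by blast
qed

end

section \<open>Strong embeddings\<close>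

lemma strong_embeddingD:
  assumes "strong_embedding P L P' L' g"
  shows "inj_on g P" "g ` P \<subseteq> P'"
    "\<And>a b c. a \<in> P \<Longrightarrow> b \<in> P \<Longrightarrow> c \<in> P \<Longrightarrow> ls_collinear L {a, b, c} \<Longrightarrow> ls_collinear L' {g a, g b, g c}"
    "\<And>X. X \<subseteq> P \<Longrightarrow> ls_independent P L X \<Longrightarrow> ls_independent P' L' (g ` X)"
  using assms unfolding strong_embedding_def by blast+

context lin_space
begin

text \<open>Collinear triples go to collinear triples, so the points whose images lie in
  \<open>\<langle>g(X)\<rangle>\<close> form a subspace.\<close>

lemma strong_embedding_span_image:
  assumes L': "lin_space P' L'" and g: "strong_embedding P L P' L' g" and X: "X \<subseteq> P"
  shows "g ` sp X \<subseteq> ls_span P' L' (g ` X)"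
proof -
  note gD = strong_embeddingD[OF g]
  have gXP: "g ` X \<subseteq> P'" using X gD(2) by blast
  define Q where "Q = {p \<in> P. g p \<in> ls_span P' L' (g ` X)}"
  have "subsp Q"
    unfolding ls_subspace_def
  proof (intro conjI ballI impI)
    show "Q \<subseteq> P" using Q_def by blast
    fix p q assume pq: "p \<in> Q" "q \<in> Q" "p \<noteq> q"
    have P: "p \<in> P" "q \<in> P" using pq Q_def by blast+
    note l = ls_line_spec[OF P pq(3)]
    show "ls_line L p q \<subseteq> Q"
    proof
      fix r assume r: "r \<in> ls_line L p q"
      have rP: "r \<in> P" using r l(1) line_subset by blast
      have "ls_collinear L {p, q, r}" unfolding ls_collinear_def using l r by blast
      then obtain l' where l': "l' \<in> L'" "g p \<in> l'" "g q \<in> l'" "g r \<in> l'"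
        using gD(3)[OF P rP] unfolding ls_collinear_def by blast
      have gpq: "g p \<noteq> g q" using gD(1) P pq(3) inj_on_def by metis
      have "l' = ls_line L' (g p) (g q)" using lin_space.ls_line_unique[OF L' l'(1-3) gpq] by simp
      moreover have "ls_line L' (g p) (g q) \<subseteq> ls_span P' L' (g ` X)"
        using lin_space.ls_line_subset_span[OF L' _ _ gpq gXP] pq Q_def by blast
      ultimately show "r \<in> Q" using l'(4) rP Q_def by blast
    qed
  qed
  moreover have "X \<subseteq> Q" using X lin_space.span_superset[OF L' gXP] Q_def by blast
  ultimately have "sp X \<subseteq> Q" by (rule span_minimal)
  then show ?thesis using Q_def by blast
qed

end

context fin_dim_space
begin

lemma strong_embedding_image_has_dim:
  assumes L0: "lin_space P0 L0" and g: "strong_embedding P0 L0 P L g"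
    and X: "ls_independent P0 L0 X" "card X = m + 1"
  shows "hdim (sp (g ` ls_span P0 L0 X)) m"
proof -
  note gD = strong_embeddingD[OF g]
  have XP: "X \<subseteq> P0" using X(1) unfolding ls_independent_def by blast
  have gXP: "g ` X \<subseteq> P" using XP gD(2) by blast
  have "card (g ` X) = m + 1" using card_image[OF inj_on_subset[OF gD(1) XP]] X(2) by simp
  then have dim: "hdim (sp (g ` X)) m" using has_dim_span gD(4)[OF XP X(1)] by blast
  have "sp (g ` ls_span P0 L0 X) \<subseteq> sp (g ` X)"
    using lin_space.strong_embedding_span_image[OF L0 _ g XP] gXP lin_space_axioms
    by (intro span_subset_span) auto
  moreover have "g ` X \<subseteq> g ` ls_span P0 L0 X" using lin_space.span_superset[OF L0 XP] by blast
  moreover have "g ` ls_span P0 L0 X \<subseteq> P" using lin_space.span_subset_P[OF L0 XP] gD(2) by blast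
  ultimately have "sp (g ` ls_span P0 L0 X) = sp (g ` X)" using span_mono by blast
  then show ?thesis using dim by simp
qed

end

section \<open>Injections sending base subsets to base subsets\<close>

lemma mult_add_self_le_imp_eq:
  fixes a k m :: nat
  assumes "a \<le> k" "k * (m + k) \<le> a * (m + a)"
  shows "a = k"
proof (rule ccontr)
  assume "a \<noteq> k"
  then have "a < k" using assms(1) by simp
  have "a * (m + a) \<le> a * (m + k)" using \<open>a < k\<close> by simp
  also have "\<dots> < k * (m + k)" using \<open>a < k\<close> by (intro mult_strict_right_mono) auto
  finally show False using assms(2) by simp
qed

lemma card_separating_pairs:
  assumes "finite B" "Z1 \<subseteq> B" "Z2 \<subseteq> B"
  shows "card ((Z1 \<inter> Z2) \<times> (B - (Z1 \<union> Z2)))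
    = card (Z1 \<inter> Z2) * (card B + card (Z1 \<inter> Z2) - card Z1 - card Z2)"
proof -
  have fin: "finite Z1" "finite Z2" using assms finite_subset by blast+
  have "card (B - (Z1 \<union> Z2)) = card B - card (Z1 \<union> Z2)"
    using assms fin by (intro card_Diff_subset) auto
  moreover have "card (Z1 \<union> Z2) + card (Z1 \<inter> Z2) = card Z1 + card Z2" using card_Un_Int[OF fin] by simp
  moreover have "card (Z1 \<union> Z2) \<le> card B" using assms by (intro card_mono) auto
  ultimately have "card (B - (Z1 \<union> Z2)) = card B + card (Z1 \<inter> Z2) - card Z1 - card Z2" by linarith
  then show ?thesis by (simp add: card_cartesian_product)
qed

lemma card_Int_le_if_ne:
  assumes "finite W1" "finite W2" "card W1 = k + 1" "card W2 = k + 1" "W1 \<noteq> W2"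
  shows "card (W1 \<inter> W2) \<le> k"
proof -
  have "card (W1 \<inter> W2) \<noteq> k + 1"
  proof
    assume c: "card (W1 \<inter> W2) = k + 1"
    have "W1 \<inter> W2 = W1" using card_subset_eq[OF assms(1), of "W1 \<inter> W2"] assms(3) c by simp
    moreover have "W1 \<inter> W2 = W2" using card_subset_eq[OF assms(2), of "W1 \<inter> W2"] assms(4) c by simp
    ultimately show False using assms(5) by simp
  qed
  moreover have "card (W1 \<inter> W2) \<le> k + 1" using card_mono[OF assms(1), of "W1 \<inter> W2"] assms(3) by simp
  ultimately show ?thesis by simp
qed

lemma card_Un_three_ge:
  assumes fin: "finite W1" "finite W2" "finite W3"
    and card: "card W1 = k + 1" "card W2 = k + 1" "card W3 = k + 1"
    and dist: "W1 \<noteq> W2" "W1 \<noteq> W3" "W2 \<noteq> W3" and common: "k \<le> card (W1 \<inter> W2 \<inter> W3)"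
  shows "k + 3 \<le> card (W1 \<union> W2 \<union> W3)"
proof -
  define C where "C = W1 \<inter> W2 \<inter> W3"
  have CW: "C \<subseteq> W1" "C \<subseteq> W2" "C \<subseteq> W3" unfolding C_def by blast+
  have "card C \<le> card (W1 \<inter> W2)" unfolding C_def using fin by (intro card_mono) auto
  then have cC: "card C = k" using card_Int_le_if_ne[OF fin(1,2) card(1,2) dist(1)] common C_def by simp
  have "finite C" using fin(1) CW(1) finite_subset by blast
  have single: "\<exists>x. x \<notin> C \<and> W = insert x C" if W: "finite W" "C \<subseteq> W" "card W = k + 1" for W
  proof -
    have "card (W - C) = 1" using W cC \<open>finite C\<close> by (simp add: card_Diff_subset)
    then obtain x where "W - C = {x}" by (rule card_1_singletonE)
    then show ?thesis using W(2) by blast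
  qed
  obtain x1 x2 x3 where x: "x1 \<notin> C" "x2 \<notin> C" "x3 \<notin> C"
    and W: "W1 = insert x1 C" "W2 = insert x2 C" "W3 = insert x3 C"
    using single[OF fin(1) CW(1) card(1)] single[OF fin(2) CW(2) card(2)] single[OF fin(3) CW(3) card(3)]
    by blast
  have "x1 \<noteq> x2" "x1 \<noteq> x3" "x2 \<noteq> x3" using dist unfolding W by auto
  moreover have "W1 \<union> W2 \<union> W3 = insert x1 (insert x2 (insert x3 C))" unfolding W by blast
  ultimately show ?thesis using cC x \<open>finite C\<close> by simp
qed

locale base_subset_map = S1: fin_dim_space P L n + S2: fin_dim_space P' L' n
  for P :: "'p set" and L :: "'p set set" and P' :: "'q set" and L' :: "'q set set" and n :: nat +
  fixes k :: nat and f :: "'p set \<Rightarrow> 'q set"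
  assumes k: "1 \<le> k" and n: "2 * k + 1 \<le> n" and P2: "axiom_P2 L"
    and f_inj: "inj_on f (Grass P L k)" and f_Grass: "f ` Grass P L k \<subseteq> Grass P' L' k"
    and f_base_subset: "\<forall>\<B>. is_base_subset P L k \<B> \<longrightarrow> is_base_subset P' L' k (f ` \<B>)"
begin

lemma image_base_subset:
  assumes "ls_base P L B"
  obtains B' where "ls_base P' L' B'" "f ` base_subset P L k B = base_subset P' L' k B'"
  using assms f_base_subset unfolding is_base_subset_def by blast

lemma f_inj_base_subset: "inj_on f (base_subset P L k B)"
  using f_inj base_subset_Grass by (rule inj_on_subset)

text \<open>The complement of \<open>base_subset_ij\<close> in a base subset lies in another base subset, whereas a
  subset of a base subset meeting every \<open>base_subset_ij\<close> does not; so the image of the complement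
  misses some \<open>base_subset_ij\<close> of the target.\<close>

lemma base_subset_ij_subset_image:
  assumes B: "ls_base P L B" and B': "ls_base P' L' B'"
    and e: "f ` base_subset P L k B = base_subset P' L' k B'"
    and ij: "i \<in> B" "j \<in> B" "i \<noteq> j"
  obtains i' j' where "i' \<in> B'" "j' \<in> B'" "i' \<noteq> j'"
    "base_subset_ij P' L' k B' i' j' \<subseteq> f ` base_subset_ij P L k B i j"
proof -
  have "k + 1 \<le> n" using n by simp
  then obtain B2 where B2: "ls_base P L B2"
    and incl: "base_subset P L k B - base_subset_ij P L k B i j \<subseteq> base_subset P L k B2"
    and neq: "base_subset P L k B2 \<noteq> base_subset P L k B"
    using S1.base_subset_minus_ij_in_other_base_subset[OF B P2 ij] by blast
  obtain B3 where B3: "ls_base P' L' B3" and e3: "f ` base_subset P L k B2 = base_subset P' L' k B3"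
    using image_base_subset[OF B2] by blast
  define X where "X = f ` (base_subset P L k B - base_subset_ij P L k B i j)"
  have X: "X \<subseteq> base_subset P' L' k B'" "X \<subseteq> base_subset P' L' k B3"
    unfolding X_def using e e3 incl by blast+
  have "f ` base_subset P L k B2 \<noteq> f ` base_subset P L k B"
    using neq by (simp add: inj_on_image_eq_iff[OF f_inj base_subset_Grass base_subset_Grass])
  then have B3B': "base_subset P' L' k B3 \<noteq> base_subset P' L' k B'" using e e3 by simp
  have "1 \<le> n" using n by simp
  have "\<not> (\<forall>i'\<in>B'. \<forall>j'\<in>B'. i' \<noteq> j' \<longrightarrow> X \<inter> base_subset_ij P' L' k B' i' j' \<noteq> {})"
    using B3B' S2.base_subset_eq_if_meets_all_ij[OF B' B3 \<open>1 \<le> n\<close> X] by (rule contrapos_nn)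
  then obtain i' j' where ij': "i' \<in> B'" "j' \<in> B'" "i' \<noteq> j'"
    and disj: "X \<inter> base_subset_ij P' L' k B' i' j' = {}" by auto
  have "base_subset_ij P' L' k B' i' j' \<subseteq> f ` base_subset_ij P L k B i j"
  proof
    fix V assume V: "V \<in> base_subset_ij P' L' k B' i' j'"
    then have "V \<in> f ` base_subset P L k B" using e base_subset_ij_subset[of P' L' k B' i' j'] by blast
    then obtain U where U: "U \<in> base_subset P L k B" "V = f U" by blast
    have "U \<in> base_subset_ij P L k B i j"
    proof (rule ccontr)
      assume "U \<notin> base_subset_ij P L k B i j"
      then have "V \<in> X" unfolding X_def using U by blast
      then show False using V disj by blast
    qed
    then show "V \<in> f ` base_subset_ij P L k B i j" using U(2) by blast
  qed
  then show thesis using that ij' by blast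
qed

lemma image_base_subset_ij:
  assumes B: "ls_base P L B" and B': "ls_base P' L' B'"
    and e: "f ` base_subset P L k B = base_subset P' L' k B'"
    and ij: "i \<in> B" "j \<in> B" "i \<noteq> j"
  obtains i' j' where "i' \<in> B'" "j' \<in> B'" "i' \<noteq> j'"
    "f ` base_subset_ij P L k B i j = base_subset_ij P' L' k B' i' j'"
proof -
  obtain i' j' where ij': "i' \<in> B'" "j' \<in> B'" "i' \<noteq> j'"
    and sub: "base_subset_ij P' L' k B' i' j' \<subseteq> f ` base_subset_ij P L k B i j"
    using base_subset_ij_subset_image[OF B B' e ij] by blast
  have fin: "finite (base_subset_ij P L k B i j)"
    by (rule finite_subset[OF base_subset_ij_subset S1.finite_base_subset[OF B]])
  have "card (f ` base_subset_ij P L k B i j) = card (base_subset_ij P L k B i j)"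
    by (rule card_image[OF inj_on_subset[OF f_inj_base_subset base_subset_ij_subset]])
  also have "\<dots> = card (base_subset_ij P' L' k B' i' j')"
    using S1.card_base_subset_ij[OF B ij] S2.card_base_subset_ij[OF B' ij'] by simp
  finally have "base_subset_ij P' L' k B' i' j' = f ` base_subset_ij P L k B i j"
    using card_subset_eq[OF finite_imageI[OF fin] sub] by simp
  then show thesis using that ij' by blast
qed

lemma base_subset_ij_pairing:
  assumes B: "ls_base P L B" and B': "ls_base P' L' B'"
    and e: "f ` base_subset P L k B = base_subset P' L' k B'"
  obtains \<sigma> where "inj_on \<sigma> (B \<times> B - Id)"
    "\<And>i j. (i, j) \<in> B \<times> B - Id \<Longrightarrow> \<sigma> (i, j) \<in> B' \<times> B' - Id \<and>
       f ` base_subset_ij P L k B i j = base_subset_ij P' L' k B' (fst (\<sigma> (i, j))) (snd (\<sigma> (i, j)))"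
proof -
  define Q where "Q i j q \<longleftrightarrow> q \<in> B' \<times> B' - Id \<and>
      f ` base_subset_ij P L k B i j = base_subset_ij P' L' k B' (fst q) (snd q)" for i j q
  define \<sigma> where "\<sigma> = (\<lambda>(i, j). SOME q. Q i j q)"
  have \<sigma>: "Q i j (\<sigma> (i, j))" if "(i, j) \<in> B \<times> B - Id" for i j
  proof -
    have ij: "i \<in> B" "j \<in> B" "i \<noteq> j" using that by auto
    obtain i' j' where "i' \<in> B'" "j' \<in> B'" "i' \<noteq> j'"
      "f ` base_subset_ij P L k B i j = base_subset_ij P' L' k B' i' j'"
      using image_base_subset_ij[OF B B' e ij] by blast
    then have "Q i j (i', j')" unfolding Q_def by simp
    then have "Q i j (SOME q. Q i j q)" by (rule someI)
    then show ?thesis unfolding \<sigma>_def by simp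
  qed
  have "inj_on \<sigma> (B \<times> B - Id)"
  proof
    fix p q assume p: "p \<in> B \<times> B - Id" and q: "q \<in> B \<times> B - Id" and eq: "\<sigma> p = \<sigma> q"
    obtain i j where p_def: "p = (i, j)" by (cases p)
    obtain i' j' where q_def: "q = (i', j')" by (cases q)
    have ij: "i \<in> B" "j \<in> B" "i \<noteq> j" and ij': "i' \<in> B" "j' \<in> B" "i' \<noteq> j'"
      using p q unfolding p_def q_def by auto
    have "f ` base_subset_ij P L k B i j = f ` base_subset_ij P L k B i' j'"
      using \<sigma>[OF p[unfolded p_def]] \<sigma>[OF q[unfolded q_def]] eq unfolding p_def q_def Q_def by simp
    then have "base_subset_ij P L k B i j = base_subset_ij P L k B i' j'"
      using inj_on_image_eq_iff[OF f_inj_base_subset base_subset_ij_subset base_subset_ij_subset] by simp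
    moreover have "k + 2 \<le> n" using k n by simp
    ultimately have "i = i' \<and> j = j'" using S1.base_subset_ij_inj[OF B ij ij' k] by blast
    then show "p = q" unfolding p_def q_def by simp
  qed
  then show thesis
  proof (rule that)
    fix i j assume "(i, j) \<in> B \<times> B - Id"
    then show "\<sigma> (i, j) \<in> B' \<times> B' - Id \<and>
       f ` base_subset_ij P L k B i j = base_subset_ij P' L' k B' (fst (\<sigma> (i, j))) (snd (\<sigma> (i, j)))"
      using \<sigma> unfolding Q_def by simp
  qed
qed

lemma image_base_subset_member:
  assumes B': "ls_base P' L' B'" and e: "f ` base_subset P L k B = base_subset P' L' k B'"
    and U: "U \<in> base_subset P L k B"
  shows "f U = ls_span P' L' (B' \<inter> f U)" "card (B' \<inter> f U) = k + 1"
proof -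
  have "f U \<in> base_subset P' L' k B'" unfolding e[symmetric] using U by blast
  then show "f U = ls_span P' L' (B' \<inter> f U)" "card (B' \<inter> f U) = k + 1"
    by (rule S2.base_subset_span_Int[OF B'])+
qed

lemma pairing_separating_pairs:
  assumes B: "ls_base P L B"
    and \<sigma>: "\<And>i j. (i, j) \<in> B \<times> B - Id \<Longrightarrow> \<sigma> (i, j) \<in> B' \<times> B' - Id \<and>
       f ` base_subset_ij P L k B i j = base_subset_ij P' L' k B' (fst (\<sigma> (i, j))) (snd (\<sigma> (i, j)))"
    and Z: "Z1 \<subseteq> B" "Z2 \<subseteq> B" "card Z1 = k + 1" "card Z2 = k + 1"
  shows "\<sigma> ` ((Z1 \<inter> Z2) \<times> (B - (Z1 \<union> Z2)))
    \<subseteq> ((B' \<inter> f (ls_span P L Z1)) \<inter> (B' \<inter> f (ls_span P L Z2))) \<times>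
      (B' - ((B' \<inter> f (ls_span P L Z1)) \<union> (B' \<inter> f (ls_span P L Z2))))"
proof
  fix q assume "q \<in> \<sigma> ` ((Z1 \<inter> Z2) \<times> (B - (Z1 \<union> Z2)))"
  then obtain i j where ij: "i \<in> Z1" "i \<in> Z2" "j \<in> B" "j \<notin> Z1" "j \<notin> Z2" "q = \<sigma> (i, j)" by auto
  then have "(i, j) \<in> B \<times> B - Id" using Z by blast
  note \<sigma>ij = \<sigma>[OF this]
  obtain i' j' where ij': "\<sigma> (i, j) = (i', j')" by (cases "\<sigma> (i, j)")
  have "ls_span P L Z1 \<in> base_subset_ij P L k B i j" "ls_span P L Z2 \<in> base_subset_ij P L k B i j"
    using S1.span_in_base_subset_ij[OF B] Z ij by blast+
  then have "f (ls_span P L Z1) \<in> base_subset_ij P' L' k B' i' j'"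
    "f (ls_span P L Z2) \<in> base_subset_ij P' L' k B' i' j'"
    using \<sigma>ij ij' by (metis fst_conv snd_conv imageI)+
  then show "q \<in> ((B' \<inter> f (ls_span P L Z1)) \<inter> (B' \<inter> f (ls_span P L Z2))) \<times>
      (B' - ((B' \<inter> f (ls_span P L Z1)) \<union> (B' \<inter> f (ls_span P L Z2))))"
    using \<sigma>ij unfolding ij(6) ij' base_subset_ij_def by auto
qed

text \<open>Counting the pairs that separate the two members and the pairs that separate their images
  gives \<open>k (m + k) \<le> a (m + a)\<close>, where \<open>a\<close> is the size of the intersection of the images and
  \<open>n = m + 2k + 1\<close>; this forces \<open>a = k\<close>.\<close>

lemma card_Int_image_base_subset:
  assumes B: "ls_base P L B" and B': "ls_base P' L' B'"
    and e: "f ` base_subset P L k B = base_subset P' L' k B'"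
    and Z: "Z1 \<subseteq> B" "Z2 \<subseteq> B" "card Z1 = k + 1" "card Z2 = k + 1" and c: "card (Z1 \<inter> Z2) = k"
  shows "card ((B' \<inter> f (ls_span P L Z1)) \<inter> (B' \<inter> f (ls_span P L Z2))) = k"
proof -
  define U1 where "U1 = ls_span P L Z1"
  define U2 where "U2 = ls_span P L Z2"
  define W1 where "W1 = B' \<inter> f U1"
  define W2 where "W2 = B' \<inter> f U2"
  have U: "U1 \<in> base_subset P L k B" "U2 \<in> base_subset P L k B"
    unfolding U1_def U2_def S1.base_subset_iff[OF B] using Z by blast+
  note W1 = image_base_subset_member[OF B' e U(1), folded W1_def]
  note W2 = image_base_subset_member[OF B' e U(2), folded W2_def]
  have WB': "W1 \<subseteq> B'" "W2 \<subseteq> B'" unfolding W1_def W2_def by blast+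
  have fin: "finite W1" "finite W2" using WB' S2.base_card(1)[OF B'] finite_subset by blast+
  have "B \<inter> U1 = Z1" "B \<inter> U2 = Z2"
    using B Z S1.independent_Int_span unfolding ls_base_def U1_def U2_def by blast+
  moreover have "Z1 \<noteq> Z2" using Z(3) c by auto
  ultimately have "U1 \<noteq> U2" by auto
  then have "f U1 \<noteq> f U2" using inj_onD[OF f_inj_base_subset _ U] by blast
  then have "W1 \<noteq> W2" using W1(1) W2(1) by auto
  then have a: "card (W1 \<inter> W2) \<le> k" using card_Int_le_if_ne[OF fin] W1(2) W2(2) by simp
  obtain \<sigma> where \<sigma>_inj: "inj_on \<sigma> (B \<times> B - Id)"
    and \<sigma>: "\<And>i j. (i, j) \<in> B \<times> B - Id \<Longrightarrow> \<sigma> (i, j) \<in> B' \<times> B' - Id \<and>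
       f ` base_subset_ij P L k B i j = base_subset_ij P' L' k B' (fst (\<sigma> (i, j))) (snd (\<sigma> (i, j)))"
    using base_subset_ij_pairing[OF B B' e] by blast
  define D where "D = (Z1 \<inter> Z2) \<times> (B - (Z1 \<union> Z2))"
  define D' where "D' = (W1 \<inter> W2) \<times> (B' - (W1 \<union> W2))"
  have "\<sigma> ` D \<subseteq> D'"
    using pairing_separating_pairs[OF B \<sigma> Z] unfolding D_def D'_def W1_def W2_def U1_def U2_def .
  moreover have "D \<subseteq> B \<times> B - Id" unfolding D_def using Z by blast
  moreover have "finite D'" unfolding D'_def using S2.base_card(1)[OF B'] fin by simp
  ultimately have "card D \<le> card D'"
    using card_inj_on_le[OF inj_on_subset[OF \<sigma>_inj]] by blast
  define m where "m = n - (2 * k + 1)"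
  then have n_eq: "n + 1 = m + 2 * k + 2" using n by simp
  have "card D = k * (m + k)"
    unfolding D_def using card_separating_pairs[OF S1.base_card(1)[OF B] Z(1,2)] S1.base_card(2)[OF B] Z c n_eq
    by simp
  moreover have "card D' = card (W1 \<inter> W2) * (m + card (W1 \<inter> W2))"
    unfolding D'_def using card_separating_pairs[OF S2.base_card(1)[OF B'] WB'] S2.base_card(2)[OF B'] W1 W2 n_eq
    by simp
  ultimately have "k * (m + k) \<le> card (W1 \<inter> W2) * (m + card (W1 \<inter> W2))"
    using \<open>card D \<le> card D'\<close> by simp
  then have "card (W1 \<inter> W2) = k" by (rule mult_add_self_le_imp_eq[OF a])
  then show ?thesis unfolding W1_def W2_def U1_def U2_def .
qed

lemma image_adjacent:
  assumes B: "ls_base P L B" and Z: "Z1 \<subseteq> B" "Z2 \<subseteq> B" "card Z1 = k + 1" "card Z2 = k + 1"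
    and c: "card (Z1 \<inter> Z2) = k"
  shows "ls_adjacent P' L' k (f (ls_span P L Z1)) (f (ls_span P L Z2))"
proof -
  obtain B' where B': "ls_base P' L' B'" and e: "f ` base_subset P L k B = base_subset P' L' k B'"
    using image_base_subset[OF B] by blast
  have "ls_span P L Z1 \<in> base_subset P L k B" "ls_span P L Z2 \<in> base_subset P L k B"
    unfolding S1.base_subset_iff[OF B] using Z by blast+
  note W1 = image_base_subset_member[OF B' e this(1)] and W2 = image_base_subset_member[OF B' e this(2)]
  have "ls_adjacent P' L' k (ls_span P' L' (B' \<inter> f (ls_span P L Z1))) (ls_span P' L' (B' \<inter> f (ls_span P L Z2)))"
    using W1(2) W2(2) card_Int_image_base_subset[OF B B' e Z c] k
    by (intro S2.adjacent_spans_in_base[OF B']) auto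
  then show ?thesis using W1(1) W2(1) by simp
qed

lemma star_image_adjacent:
  assumes S: "ls_has_dim P L S (k - 1)" and U: "ls_has_dim P L U k" "S \<subseteq> U"
    and W: "ls_has_dim P L W k" "S \<subseteq> W" and UW: "U \<noteq> W"
  shows "ls_adjacent P' L' k (f U) (f W)"
proof -
  have kk: "Suc (k - 1) = k" "k - 1 + 2 = k + 1" "k - 1 + 1 = k" using k by simp_all
  obtain B Z1 Z2 where B: "ls_base P L B" and Z: "Z1 \<subseteq> B" "Z2 \<subseteq> B"
    "card Z1 = k - 1 + 2" "card Z2 = k - 1 + 2" "card (Z1 \<inter> Z2) = k - 1 + 1"
    and UW_span: "U = ls_span P L Z1" "W = ls_span P L Z2"
    using S1.star_members_in_common_base[OF S _ U(2) _ W(2) UW] U(1) W(1) unfolding kk by blast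
  show ?thesis
    unfolding UW_span using image_adjacent[OF B Z(1,2)] Z(3-5) unfolding kk by blast
qed

lemma star_three_members:
  assumes S: "ls_has_dim P L S (k - 1)"
  obtains B U1 U2 U3 where "ls_base P L B"
    "U1 \<in> base_subset P L k B" "U2 \<in> base_subset P L k B" "U3 \<in> base_subset P L k B"
    "S \<subseteq> U1" "S \<subseteq> U2" "S \<subseteq> U3" "U1 \<noteq> U2" "U1 \<noteq> U3" "U2 \<noteq> U3"
proof -
  obtain B Y where B: "ls_base P L B" and Y: "Y \<subseteq> B" "card Y = k - 1 + 1" "ls_span P L Y = S"
    using S1.adapted_base[OF S] by blast
  have cY: "card Y = k" using Y(2) k by simp
  have "finite Y" using Y(1) S1.base_card(1)[OF B] finite_subset by blast
  then have "card (B - Y) = n + 1 - k" using S1.base_card(2)[OF B] Y(1) cY by (simp add: card_Diff_subset)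
  then have "3 \<le> card (B - Y)" using k n by simp
  then obtain T where T: "T \<subseteq> B - Y" "card T = 3" by (rule obtain_subset_with_card_n)
  from T(2) obtain a1 a2 a3 where "T = {a1, a2, a3}" and dist: "a1 \<noteq> a2" "a2 \<noteq> a3" "a1 \<noteq> a3"
    unfolding card_3_iff by blast
  then have a: "a1 \<in> B - Y" "a2 \<in> B - Y" "a3 \<in> B - Y" using T(1) by auto
  note U = S1.span_insert_in_base_subset[OF B Y(1)]
  have inj: "a = b" if ab: "a \<in> B - Y" "b \<in> B - Y" "ls_span P L (insert a Y) = ls_span P L (insert b Y)" for a b
  proof -
    have "insert a Y = B \<inter> ls_span P L (insert a Y)" using U(3)[of a] ab(1) by simp
    also have "\<dots> = insert b Y" using U(3)[of b] ab(2,3) by simp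
    finally have "a \<in> insert b Y" by blast
    then show "a = b" using ab by simp
  qed
  show thesis
  proof (rule that[OF B])
    show "ls_span P L (insert a1 Y) \<in> base_subset P L k B" "ls_span P L (insert a2 Y) \<in> base_subset P L k B"
      "ls_span P L (insert a3 Y) \<in> base_subset P L k B"
      using U(1) a unfolding cY by simp_all
    show "S \<subseteq> ls_span P L (insert a1 Y)" "S \<subseteq> ls_span P L (insert a2 Y)" "S \<subseteq> ls_span P L (insert a3 Y)"
      using U(2) a unfolding Y(3) by simp_all
    show "ls_span P L (insert a1 Y) \<noteq> ls_span P L (insert a2 Y)"
      "ls_span P L (insert a1 Y) \<noteq> ls_span P L (insert a3 Y)"
      "ls_span P L (insert a2 Y) \<noteq> ls_span P L (insert a3 Y)"
      using inj a dist by blast+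
  qed
qed

lemma star_two_members:
  assumes S: "ls_has_dim P L S (k - 1)"
  obtains U1 U2 where "ls_has_dim P L U1 k" "ls_has_dim P L U2 k" "S \<subseteq> U1" "S \<subseteq> U2" "U1 \<noteq> U2"
proof -
  obtain B U1 U2 where "U1 \<in> base_subset P L k B" "U2 \<in> base_subset P L k B"
    "S \<subseteq> U1" "S \<subseteq> U2" "U1 \<noteq> U2"
    using star_three_members[OF S] by metis
  then show thesis using that base_subset_Grass unfolding Grass_def by blast
qed

text \<open>Three members of one base subset containing \<open>S\<close> have images spanned by three distinct
  \<open>(k+1)\<close>-subsets of a base of \<open>\<Pi>'\<close>. A common \<open>(k-1)\<close>-subspace of the images forces these subsets to
  share \<open>k\<close> points, a common \<open>(k+1)\<close>-subspace forces their union to have at most \<open>k+2\<close> points.\<close>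

lemma star_image_not_in_pencil:
  assumes S: "ls_has_dim P L S (k - 1)"
    and A: "ls_has_dim P' L' A (k - 1)" and J: "ls_has_dim P' L' J (k + 1)"
    and pencil: "\<And>U. ls_has_dim P L U k \<Longrightarrow> S \<subseteq> U \<Longrightarrow> A \<subseteq> f U \<and> f U \<subseteq> J"
  shows False
proof -
  obtain B U1 U2 U3 where B: "ls_base P L B"
    and U: "U1 \<in> base_subset P L k B" "U2 \<in> base_subset P L k B" "U3 \<in> base_subset P L k B"
    and SU: "S \<subseteq> U1" "S \<subseteq> U2" "S \<subseteq> U3" and dist: "U1 \<noteq> U2" "U1 \<noteq> U3" "U2 \<noteq> U3"
    using star_three_members[OF S] by blast
  obtain B' where B': "ls_base P' L' B'" and e: "f ` base_subset P L k B = base_subset P' L' k B'"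
    using image_base_subset[OF B] by blast
  have B'I: "ls_independent P' L' B'" using B' unfolding ls_base_def by blast
  define W1 where "W1 = B' \<inter> f U1"
  define W2 where "W2 = B' \<inter> f U2"
  define W3 where "W3 = B' \<inter> f U3"
  note W1 = image_base_subset_member[OF B' e U(1), folded W1_def]
  note W2 = image_base_subset_member[OF B' e U(2), folded W2_def]
  note W3 = image_base_subset_member[OF B' e U(3), folded W3_def]
  have WB': "W1 \<subseteq> B'" "W2 \<subseteq> B'" "W3 \<subseteq> B'" unfolding W1_def W2_def W3_def by blast+
  have fin: "finite W1" "finite W2" "finite W3"
    using WB' S2.base_card(1)[OF B'] finite_subset by blast+
  have "f U1 \<noteq> f U2" "f U1 \<noteq> f U3" "f U2 \<noteq> f U3"
    using dist inj_onD[OF f_inj_base_subset] U by metis+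
  then have Wdist: "W1 \<noteq> W2" "W1 \<noteq> W3" "W2 \<noteq> W3" using W1(1) W2(1) W3(1) by metis+
  have UA: "A \<subseteq> f U1" "A \<subseteq> f U2" "A \<subseteq> f U3" and UJ: "f U1 \<subseteq> J" "f U2 \<subseteq> J" "f U3 \<subseteq> J"
    using pencil U SU base_subset_Grass unfolding Grass_def by blast+
  have "ls_span P' L' W1 \<inter> ls_span P' L' W2 \<inter> ls_span P' L' W3 = ls_span P' L' (W1 \<inter> W2 \<inter> W3)"
    using S2.span_Int_independent[OF B'I S2.base_card(1)[OF B']] WB' by (metis Int_assoc le_infI1)
  then have "A \<subseteq> ls_span P' L' (W1 \<inter> W2 \<inter> W3)" using UA W1(1) W2(1) W3(1) by auto
  moreover have "finite (W1 \<inter> W2 \<inter> W3)" "W1 \<inter> W2 \<inter> W3 \<subseteq> P'"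
    using fin WB' S2.independent_subset_P[OF B'I] by auto
  ultimately have "k - 1 + 1 \<le> card (W1 \<inter> W2 \<inter> W3)"
    using S2.has_dim_le_card_spanning[OF A] by blast
  then have common: "k \<le> card (W1 \<inter> W2 \<inter> W3)" using k by simp
  have "W1 \<union> W2 \<union> W3 \<subseteq> J" using UJ W1(1) W2(1) W3(1) WB' S2.span_superset S2.independent_subset_P[OF B'I]
    by (metis Un_least subset_trans)
  moreover have "ls_independent P' L' (W1 \<union> W2 \<union> W3)" using WB' S2.independent_mono[OF B'I] by simp
  ultimately have "card (W1 \<union> W2 \<union> W3) \<le> k + 1 + 1" by (intro S2.independent_card_le_has_dim[OF _ _ J])
  then show False using card_Un_three_ge[OF fin W1(2) W2(2) W3(2) Wdist common] by simp
qed

lemma Grass_inc_star: "ls_has_dim P L S (k - 1) \<Longrightarrow> U \<in> Grass_inc P L k S \<longleftrightarrow> ls_has_dim P L U k \<and> S \<subseteq> U"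
  using S1.Grass_inc_below k by simp

lemma star_image_in_star_or_top:
  assumes S: "ls_has_dim P L S (k - 1)"
  shows "\<exists>S'. (ls_has_dim P' L' S' (k - 1) \<or> ls_has_dim P' L' S' (k + 1)) \<and>
           f ` Grass_inc P L k S \<subseteq> Grass_inc P' L' k S'"
proof -
  obtain U1 U2 where U: "ls_has_dim P L U1 k" "ls_has_dim P L U2 k" "S \<subseteq> U1" "S \<subseteq> U2" "U1 \<noteq> U2"
    using star_two_members[OF S] .
  define \<V> where "\<V> = f ` Grass_inc P L k S"
  have \<V>_dim: "\<forall>V\<in>\<V>. ls_has_dim P' L' V k"
    using f_Grass Grass_inc_star[OF S] unfolding \<V>_def Grass_def by blast
  have "\<forall>V\<in>\<V>. \<forall>W\<in>\<V>. V \<noteq> W \<longrightarrow> ls_adjacent P' L' k V W"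
    using star_image_adjacent[OF S] Grass_inc_star[OF S] unfolding \<V>_def by blast
  moreover have V12: "f U1 \<in> \<V>" "f U2 \<in> \<V>" using U Grass_inc_star[OF S] unfolding \<V>_def by blast+
  moreover have "f U1 \<noteq> f U2" using inj_onD[OF f_inj] U unfolding Grass_def by blast
  ultimately have "(\<forall>V\<in>\<V>. f U1 \<inter> f U2 \<subseteq> V) \<or> (\<forall>V\<in>\<V>. V \<subseteq> ls_span P' L' (f U1 \<union> f U2))"
    using S2.pairwise_adjacent_star_or_top[OF k \<V>_dim] by blast
  moreover have "ls_adjacent P' L' k (f U1) (f U2)" using star_image_adjacent[OF S U(1,3) U(2,4,5)] .
  then have low: "ls_has_dim P' L' (f U1 \<inter> f U2) (k - 1)"
    and high: "ls_has_dim P' L' (ls_span P' L' (f U1 \<union> f U2)) (k + 1)"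
    unfolding ls_adjacent_def by blast+
  ultimately show ?thesis
    using S2.Grass_inc_below[OF low] S2.Grass_inc_above[OF high] \<V>_dim k unfolding \<V>_def by force
qed

lemma star_or_top_unique:
  assumes S: "ls_has_dim P L S (k - 1)"
    and X: "ls_has_dim P' L' X (k - 1) \<or> ls_has_dim P' L' X (k + 1)" "f ` Grass_inc P L k S \<subseteq> Grass_inc P' L' k X"
    and Y: "ls_has_dim P' L' Y (k - 1) \<or> ls_has_dim P' L' Y (k + 1)" "f ` Grass_inc P L k S \<subseteq> Grass_inc P' L' k Y"
  shows "X = Y"
proof -
  obtain U1 U2 where U: "ls_has_dim P L U1 k" "ls_has_dim P L U2 k" "S \<subseteq> U1" "S \<subseteq> U2" "U1 \<noteq> U2"
    using star_two_members[OF S] .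
  have "ls_adjacent P' L' k (f U1) (f U2)" using star_image_adjacent[OF S U(1,3) U(2,4,5)] .
  then have low: "ls_has_dim P' L' (f U1 \<inter> f U2) (k - 1)"
    and high: "ls_has_dim P' L' (ls_span P' L' (f U1 \<union> f U2)) (k + 1)"
    unfolding ls_adjacent_def by blast+
  have inc: "f U \<in> Grass_inc P' L' k Z"
    if "f ` Grass_inc P L k S \<subseteq> Grass_inc P' L' k Z" "ls_has_dim P L U k" "S \<subseteq> U" for U Z
    using that Grass_inc_star[OF S] by blast
  have star: "Z = f U1 \<inter> f U2"
    if Z: "ls_has_dim P' L' Z (k - 1)" "f ` Grass_inc P L k S \<subseteq> Grass_inc P' L' k Z" for Z
  proof -
    have "Z \<subseteq> f U1 \<inter> f U2" using inc[OF Z(2)] U S2.Grass_inc_below[OF Z(1)] k by force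
    then show ?thesis using S2.has_dim_subset_eq[OF Z(1) low] by blast
  qed
  have top: "Z = ls_span P' L' (f U1 \<union> f U2)"
    if Z: "ls_has_dim P' L' Z (k + 1)" "f ` Grass_inc P L k S \<subseteq> Grass_inc P' L' k Z" for Z
  proof -
    have "f U1 \<union> f U2 \<subseteq> Z" using inc[OF Z(2)] U S2.Grass_inc_above[OF Z(1)] by force
    then have "ls_span P' L' (f U1 \<union> f U2) \<subseteq> Z"
      by (rule S2.span_minimal[OF S2.has_dim_subspace[OF Z(1)]])
    then show ?thesis using S2.has_dim_subset_eq[OF high Z(1)] by blast
  qed
  have mixed: False
    if Z: "ls_has_dim P' L' Z (k - 1)" "f ` Grass_inc P L k S \<subseteq> Grass_inc P' L' k Z"
      and T: "ls_has_dim P' L' T (k + 1)" "f ` Grass_inc P L k S \<subseteq> Grass_inc P' L' k T" for Z T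
  proof (rule star_image_not_in_pencil[OF S Z(1) T(1)])
    fix U assume "ls_has_dim P L U k" "S \<subseteq> U"
    then show "Z \<subseteq> f U \<and> f U \<subseteq> T"
      using inc[OF Z(2)] inc[OF T(2)] S2.Grass_inc_below[OF Z(1)] S2.Grass_inc_above[OF T(1)] k by force
  qed
  show ?thesis
    using X(1) Y(1) star[OF _ X(2)] star[OF _ Y(2)] top[OF _ X(2)] top[OF _ Y(2)]
      mixed[OF _ X(2) _ Y(2)] mixed[OF _ Y(2) _ X(2)] by blast
qed

lemma image_star_subset_f_lower:
  assumes S: "ls_has_dim P L S (k - 1)"
  shows "f ` Grass_inc P L k S \<subseteq> Grass_inc P' L' k (f_lower P L P' L' k f S)"
proof -
  obtain S0 where S0: "(ls_has_dim P' L' S0 (k - 1) \<or> ls_has_dim P' L' S0 (k + 1)) \<and>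
      f ` Grass_inc P L k S \<subseteq> Grass_inc P' L' k S0"
    using star_image_in_star_or_top[OF S] by blast
  have "\<exists>!S'. (ls_has_dim P' L' S' (k - 1) \<or> ls_has_dim P' L' S' (k + 1)) \<and>
      f ` Grass_inc P L k S \<subseteq> Grass_inc P' L' k S'"
    using S0 star_or_top_unique[OF S] by (intro ex1I[of _ S0]) blast+
  then show ?thesis unfolding f_lower_def by (rule theI'[THEN conjunct2])
qed

lemma embedding_point_in_image:
  assumes g: "strong_embedding P L P' L' g"
    and lower: "\<forall>S \<in> Grass P L (k - 1). f_lower P L P' L' k f S = ls_span P' L' (g ` S)"
    and X: "ls_independent P L X" "card X = k + 1" and x: "x \<in> X"
  shows "g x \<in> f (ls_span P L X)"
proof -
  have "finite X" using S1.independent_finite[OF X(1)] .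
  then have "card (X - {x}) = k" using X(2) x by simp
  then have "X - {x} \<noteq> {}" using k by (intro notI) simp
  then obtain y where y: "y \<in> X" "y \<noteq> x" by blast
  define S where "S = ls_span P L (X - {y})"
  have XP: "X \<subseteq> P" using X(1) by (rule S1.independent_subset_P)
  have Y: "ls_independent P L (X - {y})" using S1.independent_mono[OF X(1)] by blast
  have cY: "card (X - {y}) = k - 1 + 1" using X(2) y \<open>finite X\<close> k by simp
  have S_dim: "ls_has_dim P L S (k - 1)" unfolding S_def by (rule S1.has_dim_span[OF Y cY])
  have "k - 1 < k" using k by simp
  have "S \<subseteq> ls_span P L X" unfolding S_def using XP by (intro S1.span_mono) auto
  then have "ls_span P L X \<in> Grass_inc P L k S"
    unfolding Grass_inc_star[OF S_dim] using S1.has_dim_span[OF X] by blast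
  then have "f (ls_span P L X) \<in> Grass_inc P' L' k (f_lower P L P' L' k f S)"
    using image_star_subset_f_lower[OF S_dim] by blast
  moreover have "f_lower P L P' L' k f S = ls_span P' L' (g ` S)"
    using lower S_dim unfolding Grass_def by blast
  moreover have gS_dim: "ls_has_dim P' L' (ls_span P' L' (g ` S)) (k - 1)"
    unfolding S_def by (rule S2.strong_embedding_image_has_dim[OF S1.lin_space_axioms g Y cY])
  ultimately have "ls_span P' L' (g ` S) \<subseteq> f (ls_span P L X)"
    by (simp add: S2.Grass_inc_below[OF gS_dim \<open>k - 1 < k\<close>])
  moreover have "g ` S \<subseteq> P'"
    using S1.span_subset_P[of "X - {y}"] XP strong_embeddingD(2)[OF g] unfolding S_def by blast
  then have "g ` S \<subseteq> ls_span P' L' (g ` S)" by (rule S2.span_superset)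
  moreover have "x \<in> S" unfolding S_def using S1.span_superset[of "X - {y}"] XP x y by blast
  ultimately show ?thesis by blast
qed

lemma f_eq_span_image:
  assumes g: "strong_embedding P L P' L' g"
    and lower: "\<forall>S \<in> Grass P L (k - 1). f_lower P L P' L' k f S = ls_span P' L' (g ` S)"
    and U: "U \<in> Grass P L k"
  shows "f U = ls_span P' L' (g ` U)"
proof -
  have "ls_has_dim P L U k" using U unfolding Grass_def by simp
  then obtain X where X: "ls_independent P L X" "card X = k + 1" "ls_span P L X = U"
    by (rule S1.has_dim_independent_basis)
  have XP: "X \<subseteq> P" using X(1) by (rule S1.independent_subset_P)
  have fU: "ls_has_dim P' L' (f U) k" using f_Grass U unfolding Grass_def by blast
  have "g ` X \<subseteq> f U" using embedding_point_in_image[OF g lower X(1,2)] unfolding X(3) by blast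
  then have "ls_span P' L' (g ` X) \<subseteq> f U"
    by (rule S2.span_minimal[OF S2.has_dim_subspace[OF fU]])
  moreover have "g ` U \<subseteq> ls_span P' L' (g ` X)"
    using S1.strong_embedding_span_image[OF S2.lin_space_axioms g XP] unfolding X(3) .
  ultimately have "ls_span P' L' (g ` U) \<subseteq> f U"
    by (intro S2.span_minimal[OF S2.has_dim_subspace[OF fU]]) (rule subset_trans)
  moreover have "ls_has_dim P' L' (ls_span P' L' (g ` U)) k"
    using S2.strong_embedding_image_has_dim[OF S1.lin_space_axioms g X(1,2)] unfolding X(3) .
  ultimately show ?thesis using S2.has_dim_subset_eq[OF _ fU] by blast
qed

end

theorem lemma2p9:
  fixes P :: "'p set" and L :: "'p set set" and P' :: "'q set" and L' :: "'q set set"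
    and n k :: nat and f :: "'p set \<Rightarrow> 'q set" and g :: "'p \<Rightarrow> 'q"
  assumes "linear_space P L" and "linear_space P' L'"
    and "ls_has_dim P L P n" and "ls_has_dim P' L' P' n"
    and "exchange_axiom P L" and "exchange_axiom P' L'"
    and "axiom_P2 L" and "axiom_P2 L'"
    and "k \<ge> 1" and "n \<ge> 2 * k + 1"
    and "inj_on f (Grass P L k)" and "f ` Grass P L k \<subseteq> Grass P' L' k"
    and "\<forall>\<B>. is_base_subset P L k \<B> \<longrightarrow> is_base_subset P' L' k (f ` \<B>)"
    and "strong_embedding P L P' L' g"
    and "\<forall>S \<in> Grass P L (k - 1). f_lower P L P' L' k f S = ls_span P' L' (g ` S)"
  shows "\<forall>U \<in> Grass P L k. f U = ls_span P' L' (g ` U)"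
proof -
  interpret base_subset_map P L P' L' n k f
    by unfold_locales (use assms in simp_all)
  show ?thesis using f_eq_span_image[OF assms(14,15)] by blast
qed

end
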